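(* Let $I^{\imath}=[1,r]\times([-r,r]\setminus\{0\})$. For each $A=(a_{ij})\in\Pi^{\imath}_{n,d}$ we have $\tilde y_A=w_A^+$, and moreover $$\ell'(w_A^+)=d^2-\frac12\sum_{(i,j)\in I^{\imath}}\Big(\sum_{x<i,\,y<j}a_{ij}a_{xy}+\sum_{x>i,\,y>j}a_{ij}a_{xy}\Big)-\frac12\sum_{i>0,\,j>0}a_{ij},$$ where all indices range over $[-r,r]\setminus\{0\}$.
   Context: $d\ge1$, $n=2r\ge2$. $W_{C_d}$ is the group of permutations $w$ of $\{\pm1,\dots,\pm d\}$ with $w(-i)=-w(i)$, simple reflections $s_0=(-1,1)$, $s_i=(-i-1,-i)(i,i+1)$, length $\ell'$. $\Pi^{\imath}_{n,d}$ is the set of matrices $(a_{ij})_{i,j\in[-r,r]\setminus\{0\}}$ of nonnegative integers with $a_{ij}=a_{-i,-j}$, $\sum a_{ij}=2d$; $\lambda=ro(A)$, $\mu=co(A)$ are the row and column sum vectors. For such $\lambda$, $R_i^\lambda=[\lambda_1+\dots+\lambda_{i-1}+1,\lambda_1+\dots+\lambda_i]$ for $i>0$, $R_{-i}^\lambda=-R_i^\lambda$, $W_\lambda=\{w:w(R_i^\lambda)=R_i^\lambda\ \forall i\}$. The double coset of $A$ is the unique $W_\lambda yW_\mu$ with $\sharp(R_i^\lambda\cap y(R_j^\mu))=a_{ij}$ for all $i,j$, and $w_A^+$ is its longest element. $\tilde y_A$: form a pseudo-matrix whose $(i,j)$ cell is a sequence of $a_{ij}$ numbers, filled with $-d,\dots,-1,1,\dots,d$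 in increasing order, going through rows from top ($i=-r$) to bottom ($i=r$), within a row through cells from right to left, within a cell from right to left. Read it column by column from left ($j=-r$) to right, within a column from bottom to top, within a cell from left to right, obtaining $z_1,\dots,z_{2d}$; $\tilde y_A$ sends the $k$-th element of $(-d,\dots,-1,1,\dots,d)$ to $z_k$. *)

theory Defs
  imports Complex_Main
begin

text \<open>Signed permutations are represented as functions int => int that
  permute {-d..d}-{0}, satisfy w(-i) = -w(i), and are the identity elsewhere.\<close>

definition sgnset :: "nat \<Rightarrow> int set" where
  "sgnset d = {- int d .. int d} - {0}"

definition WC :: "nat \<Rightarrow> (int \<Rightarrow> int) set" where
  "WC d = {w. bij_betw w (sgnset d) (sgnset d) \<and> (\<forall>i. w (- i) = - w i)
              \<and> (\<forall>x. x \<notin> sgnset d \<longrightarrow> w x = x)}"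

definition sref :: "nat \<Rightarrow> int \<Rightarrow> int" where
  "sref i x = (if i = 0 then (if x = 1 then -1 else if x = -1 then 1 else x)
     else (if x = int i then int i + 1 else if x = int i + 1 then int i
           else if x = - int i then - int i - 1 else if x = - int i - 1 then - int i
           else x))"

definition lenC :: "nat \<Rightarrow> (int \<Rightarrow> int) \<Rightarrow> nat" where
  "lenC d w = (LEAST k. \<exists>ws. length ws = k \<and> set ws \<subseteq> {0..<d}
                  \<and> w = foldr (\<lambda>i f. sref i \<circ> f) ws id)"

definition Idx :: "nat \<Rightarrow> int set" where
  "Idx r = {- int r .. int r} - {0}"

definition Idxl :: "nat \<Rightarrow> int list" where
  "Idxl r = [- int r .. -1] @ [1 .. int r]"

definition PiC :: "nat \<Rightarrow> nat \<Rightarrow> (int \<Rightarrow> int \<Rightarrow> nat) set" where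
  "PiC r d = {A. (\<forall>i\<in>Idx r. \<forall>j\<in>Idx r. A i j = A (- i) (- j))
              \<and> (\<Sum>i\<in>Idx r. \<Sum>j\<in>Idx r. A i j) = 2 * d}"

definition ro :: "nat \<Rightarrow> (int \<Rightarrow> int \<Rightarrow> nat) \<Rightarrow> int \<Rightarrow> nat" where
  "ro r A i = (\<Sum>j\<in>Idx r. A i j)"

definition co :: "nat \<Rightarrow> (int \<Rightarrow> int \<Rightarrow> nat) \<Rightarrow> int \<Rightarrow> nat" where
  "co r A j = (\<Sum>i\<in>Idx r. A i j)"

definition Rpos :: "(int \<Rightarrow> nat) \<Rightarrow> int \<Rightarrow> int set" where
  "Rpos lam i = {int (\<Sum>k\<in>{1..i-1}. lam k) + 1 .. int (\<Sum>k\<in>{1..i}. lam k)}"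

definition Rset :: "(int \<Rightarrow> nat) \<Rightarrow> int \<Rightarrow> int set" where
  "Rset lam i = (if i > 0 then Rpos lam i else uminus ` Rpos lam (- i))"

definition Wpar :: "nat \<Rightarrow> nat \<Rightarrow> (int \<Rightarrow> nat) \<Rightarrow> (int \<Rightarrow> int) set" where
  "Wpar r d lam = {w \<in> WC d. \<forall>i\<in>Idx r. w ` Rset lam i = Rset lam i}"

definition dcoset :: "nat \<Rightarrow> nat \<Rightarrow> (int \<Rightarrow> nat) \<Rightarrow> (int \<Rightarrow> nat) \<Rightarrow> (int \<Rightarrow> int)
    \<Rightarrow> (int \<Rightarrow> int) set" where
  "dcoset r d lam mu y = {u \<circ> y \<circ> v | u v. u \<in> Wpar r d lam \<and> v \<in> Wpar r d mu}"

definition dcoset_of :: "nat \<Rightarrow> nat \<Rightarrow> (int \<Rightarrow> int \<Rightarrow> nat) \<Rightarrow> (int \<Rightarrow> int) set" where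
  "dcoset_of r d A = (THE D. \<exists>y\<in>WC d. D = dcoset r d (ro r A) (co r A) y
       \<and> (\<forall>i\<in>Idx r. \<forall>j\<in>Idx r.
             card (Rset (ro r A) i \<inter> y ` Rset (co r A) j) = A i j))"

definition wplus :: "nat \<Rightarrow> nat \<Rightarrow> (int \<Rightarrow> int \<Rightarrow> nat) \<Rightarrow> (int \<Rightarrow> int)" where
  "wplus r d A = (THE w. w \<in> dcoset_of r d A \<and> (\<forall>v\<in>dcoset_of r d A. lenC d v \<le> lenC d w))"

definition sgnl :: "nat \<Rightarrow> int list" where
  "sgnl d = [- int d .. -1] @ [1 .. int d]"

definition fill_cells :: "nat \<Rightarrow> (int \<times> int) list" where
  "fill_cells r = [(i, j). i \<leftarrow> Idxl r, j \<leftarrow> rev (Idxl r)]"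

definition read_cells :: "nat \<Rightarrow> (int \<times> int) list" where
  "read_cells r = [(i, j). j \<leftarrow> Idxl r, i \<leftarrow> rev (Idxl r)]"

definition cell_offset :: "nat \<Rightarrow> (int \<Rightarrow> int \<Rightarrow> nat) \<Rightarrow> int \<Rightarrow> int \<Rightarrow> nat" where
  "cell_offset r A i j =
     sum_list (map (\<lambda>(x, y). A x y) (takeWhile (\<lambda>c. c \<noteq> (i, j)) (fill_cells r)))"

text \<open>Content of cell (i,j) read from left to right; it was filled right to left.\<close>
definition cell_content :: "nat \<Rightarrow> nat \<Rightarrow> (int \<Rightarrow> int \<Rightarrow> nat) \<Rightarrow> int \<Rightarrow> int \<Rightarrow> int list" where
  "cell_content r d A i j = rev (take (A i j) (drop (cell_offset r A i j) (sgnl d)))"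

definition zseq :: "nat \<Rightarrow> nat \<Rightarrow> (int \<Rightarrow> int \<Rightarrow> nat) \<Rightarrow> int list" where
  "zseq r d A = concat (map (\<lambda>(i, j). cell_content r d A i j) (read_cells r))"

definition ytilde :: "nat \<Rightarrow> nat \<Rightarrow> (int \<Rightarrow> int \<Rightarrow> nat) \<Rightarrow> int \<Rightarrow> int" where
  "ytilde r d A x = (case map_of (zip (sgnl d) (zseq r d A)) x of None \<Rightarrow> x | Some z \<Rightarrow> z)"

end

theory Submission
  imports Defs
begin

(*
  The double coset of A consists of the signed permutations v whose intersection numbers
  #(R_i^lambda \<inter> v(R_j^mu)) are the entries a_ij.  Call a pair a < b of letters a
  non-inversion of v if v a < v b.  Counting pairs gives the identity
    2 l(v) + #{non-inversions} = d (2d - 1) + #{a > 0. v a < 0},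
  and on the double coset the last term depends on A only.  Letters a, b lying in cells (x, y)
  and (i, j) with x < i, y < j always form a non-inversion, so every v in the coset has at least
  N_A = sum a_xy a_ij non-inversions, and v is longest iff it has no others, i.e. iff v is
  decreasing on every block R_j^mu and v^-1 is decreasing on every block R_i^lambda.  Such a v is
  unique: the number of letters below a in its block R_j^mu determines the block R_i^lambda
  containing v a.  The permutation tilde y_A, which reads every cell against the order in which it
  was filled, is of this kind.  The length formula is the identity above with N_A non-inversions,
  rewritten with the help of the symmetry a_ij = a_-i,-j.
*)

section \<open>Signed permutations\<close>

abbreviation sgn_nth :: "nat \<Rightarrow> nat \<Rightarrow> int" where
  "sgn_nth d k \<equiv> sgnl d ! k"

lemma length_sgnl [simp]: "length (sgnl d) = 2 * d"
  by (simp add: sgnl_def)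

lemma sgn_nth_eq: "k < 2 * d \<Longrightarrow> sgn_nth d k = (if k < d then int k - int d else int k - int d + 1)"
  by (auto simp: sgnl_def nth_append nth_upto)

lemma set_sgnl: "set (sgnl d) = sgnset d"
  by (auto simp: sgnl_def sgnset_def)

lemma distinct_sgnl: "distinct (sgnl d)"
  by (auto simp: sgnl_def)

lemma finite_sgnset [simp]: "finite (sgnset d)"
  by (simp add: sgnset_def)

lemma card_sgnset: "card (sgnset d) = 2 * d"
  using distinct_card[OF distinct_sgnl] by (simp add: set_sgnl)

lemma zero_notin_sgnset [simp]: "0 \<notin> sgnset d"
  by (simp add: sgnset_def)

lemma uminus_in_sgnset_iff [simp]: "- x \<in> sgnset d \<longleftrightarrow> x \<in> sgnset d"
  by (auto simp: sgnset_def)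

lemma sgn_nth_less_iff: "k < 2 * d \<Longrightarrow> k' < 2 * d \<Longrightarrow> sgn_nth d k < sgn_nth d k' \<longleftrightarrow> k < k'"
  by (simp add: sgn_nth_eq) linarith

lemma sgn_nth_eq_iff: "k < 2 * d \<Longrightarrow> k' < 2 * d \<Longrightarrow> sgn_nth d k = sgn_nth d k' \<longleftrightarrow> k = k'"
  by (simp add: sgn_nth_eq)

lemma inj_on_sgn_nth: "inj_on (sgn_nth d) {0..<2 * d}"
  by (auto simp: inj_on_def sgn_nth_eq_iff)

lemma sgn_nth_reflect: "k < 2 * d \<Longrightarrow> sgn_nth d (2 * d - 1 - k) = - sgn_nth d k"
  by (simp add: sgn_nth_eq) linarith

lemma sgn_nth_in_sgnset: "k < 2 * d \<Longrightarrow> sgn_nth d k \<in> sgnset d"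
  using nth_mem[of k "sgnl d"] by (simp add: set_sgnl)

lemma sgnset_nthE:
  assumes "x \<in> sgnset d"
  obtains k where "k < 2 * d" "x = sgn_nth d k"
  by (metis assms in_set_conv_nth length_sgnl set_sgnl)

lemma sgn_nth_card_less:
  assumes "x \<in> sgnset d"
  shows "x = sgn_nth d (card {y \<in> sgnset d. y < x})"
proof -
  obtain k where k: "k < 2 * d" "x = sgn_nth d k"
    using assms by (rule sgnset_nthE)
  have "{y \<in> sgnset d. y < x} = sgn_nth d ` {0..<k}"
  proof
    show "{y \<in> sgnset d. y < x} \<subseteq> sgn_nth d ` {0..<k}"
      using k by (auto elim!: sgnset_nthE simp: sgn_nth_less_iff)
    show "sgn_nth d ` {0..<k} \<subseteq> {y \<in> sgnset d. y < x}"
      using k by (auto simp: sgn_nth_in_sgnset sgn_nth_less_iff)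
  qed
  moreover have "inj_on (sgn_nth d) {0..<k}"
    using inj_on_subset[OF inj_on_sgn_nth] k(1) by auto
  ultimately show ?thesis
    using k by (simp add: card_image)
qed

lemma uminus_sgn_nth_image:
  assumes "a + l \<le> 2 * d"
  shows "uminus ` sgn_nth d ` {a..<a + l} = sgn_nth d ` {2 * d - (a + l)..<2 * d - a}"
proof -
  have "uminus ` sgn_nth d ` {a..<a + l} = (\<lambda>k. sgn_nth d (2 * d - 1 - k)) ` {a..<a + l}"
    unfolding image_image
  proof (rule image_cong)
    fix k assume "k \<in> {a..<a + l}"
    then show "- sgn_nth d k = sgn_nth d (2 * d - 1 - k)"
      using assms sgn_nth_reflect[of k d] by simp
  qed simp
  also have "\<dots> = sgn_nth d ` ((\<lambda>k. 2 * d - 1 - k) ` {a..<a + l})"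
    by (simp add: image_image)
  also have "(\<lambda>k. 2 * d - 1 - k) ` {a..<a + l} = {2 * d - (a + l)..<2 * d - a}"
  proof
    show "(\<lambda>k. 2 * d - 1 - k) ` {a..<a + l} \<subseteq> {2 * d - (a + l)..<2 * d - a}"
      using assms by auto
    show "{2 * d - (a + l)..<2 * d - a} \<subseteq> (\<lambda>k. 2 * d - 1 - k) ` {a..<a + l}"
    proof
      fix k assume "k \<in> {2 * d - (a + l)..<2 * d - a}"
      then show "k \<in> (\<lambda>k. 2 * d - 1 - k) ` {a..<a + l}"
        using assms by (intro image_eqI[of _ _ "2 * d - 1 - k"]) auto
    qed
  qed
  finally show ?thesis .
qed

lemma sgn_nth_image_upper:
  assumes "d + s + l \<le> 2 * d"
  shows "sgn_nth d ` {d + s..<d + s + l} = {int s + 1 .. int s + int l}"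
proof
  show "sgn_nth d ` {d + s..<d + s + l} \<subseteq> {int s + 1 .. int s + int l}"
    using assms by (auto simp: sgn_nth_eq)
  show "{int s + 1 .. int s + int l} \<subseteq> sgn_nth d ` {d + s..<d + s + l}"
  proof
    fix x assume x: "x \<in> {int s + 1 .. int s + int l}"
    then show "x \<in> sgn_nth d ` {d + s..<d + s + l}"
      using assms by (intro image_eqI[of _ _ "nat (x + int d - 1)"]) (auto simp: sgn_nth_eq)
  qed
qed

lemma WC_mem: "w \<in> WC d \<Longrightarrow> x \<in> sgnset d \<Longrightarrow> w x \<in> sgnset d"
  unfolding WC_def bij_betw_def by blast

lemma WC_odd: "w \<in> WC d \<Longrightarrow> w (- i) = - w i"
  by (simp add: WC_def)

lemma WC_fixes: "w \<in> WC d \<Longrightarrow> x \<notin> sgnset d \<Longrightarrow> w x = x"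
  by (simp add: WC_def)

lemma WC_image: "w \<in> WC d \<Longrightarrow> w ` sgnset d = sgnset d"
  by (simp add: WC_def bij_betw_def)

lemma WC_bij:
  assumes "w \<in> WC d"
  shows "bij w"
proof -
  have "bij_betw w (- sgnset d) (- sgnset d) \<longleftrightarrow> bij_betw id (- sgnset d) (- sgnset d)"
    by (rule bij_betw_cong) (simp add: WC_fixes[OF assms])
  then have "bij_betw w (- sgnset d) (- sgnset d)"
    by (simp add: bij_betw_id)
  moreover have "bij_betw w (sgnset d) (sgnset d)"
    using assms by (simp add: WC_def)
  ultimately have "bij_betw w (sgnset d \<union> - sgnset d) (sgnset d \<union> - sgnset d)"
    by (intro bij_betw_combine) auto
  then show ?thesis
    by simp
qed

lemma WC_inj: "w \<in> WC d \<Longrightarrow> inj_on w X"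
  using WC_bij bij_is_inj inj_on_subset subset_UNIV by metis

lemma WC_eq_iff: "w \<in> WC d \<Longrightarrow> w a = w b \<longleftrightarrow> a = b"
  using WC_bij bij_is_inj injD by metis

lemma WC_inv_apply [simp]: "w \<in> WC d \<Longrightarrow> inv w (w x) = x"
  using WC_bij bij_is_inj inv_f_f by metis

lemma WC_apply_inv [simp]: "w \<in> WC d \<Longrightarrow> w (inv w x) = x"
  using WC_bij bij_is_surj surj_f_inv_f by metis

lemma WC_id: "id \<in> WC d"
  by (auto simp: WC_def)

lemma WC_comp: "u \<in> WC d \<Longrightarrow> v \<in> WC d \<Longrightarrow> u \<circ> v \<in> WC d"
  unfolding WC_def by (auto intro: bij_betw_trans)

lemma WC_inv:
  assumes "w \<in> WC d"
  shows "inv w \<in> WC d"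
proof -
  have "inv w ` sgnset d = sgnset d"
    using assms by (metis WC_bij WC_image bij_is_inj image_inv_f_f)
  moreover have "inj_on (inv w) (sgnset d)"
    using assms by (meson WC_bij bij_imp_bij_inv bij_is_inj inj_on_subset subset_UNIV)
  moreover have "inv w (- i) = - inv w i" for i
    by (metis assms WC_odd WC_inv_apply WC_apply_inv)
  moreover have "x \<notin> sgnset d \<Longrightarrow> inv w x = x" for x
    by (metis assms WC_fixes WC_inv_apply)
  ultimately show ?thesis
    by (simp add: WC_def bij_betw_def)
qed

definition odd_ext :: "nat \<Rightarrow> (int \<Rightarrow> int) \<Rightarrow> int \<Rightarrow> int" where
  "odd_ext d f a = (if a \<in> sgnset d then if 0 < a then f a else - f (- a) else a)"

lemma odd_ext_uminus: "odd_ext d f (- a) = - odd_ext d f a"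
  by (cases "a \<in> sgnset d"; cases "0 < a") (auto simp: odd_ext_def sgnset_def)

lemma odd_ext_WC:
  assumes "inj_on (odd_ext d f) (sgnset d)" "odd_ext d f ` sgnset d \<subseteq> sgnset d"
  shows "odd_ext d f \<in> WC d"
  using assms odd_ext_uminus endo_inj_surj[of "sgnset d" "odd_ext d f"]
  by (simp add: WC_def bij_betw_def odd_ext_def)

lemma WC_eq_sgn_nth_card_less:
  assumes v: "v \<in> WC d" and a: "a \<in> sgnset d"
  shows "v a = sgn_nth d (card {b \<in> sgnset d. v b < v a})"
proof -
  have "{y \<in> sgnset d. y < v a} = v ` {b \<in> sgnset d. v b < v a}"
  proof
    show "{y \<in> sgnset d. y < v a} \<subseteq> v ` {b \<in> sgnset d. v b < v a}"
    proof
      fix y assume "y \<in> {y \<in> sgnset d. y < v a}"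
      then show "y \<in> v ` {b \<in> sgnset d. v b < v a}"
        using WC_mem[OF WC_inv[OF v]] v by (intro image_eqI[of _ _ "inv v y"]) auto
    qed
    show "v ` {b \<in> sgnset d. v b < v a} \<subseteq> {y \<in> sgnset d. y < v a}"
      using WC_mem[OF v] by auto
  qed
  then have "card {y \<in> sgnset d. y < v a} = card {b \<in> sgnset d. v b < v a}"
    using WC_inj[OF v] by (simp add: card_image)
  then show ?thesis
    using sgn_nth_card_less[OF WC_mem[OF v a]] by simp
qed

section \<open>Coxeter length as a count of inversions\<close>

(* Of each mirror pair (a, b), (- b, - a) of inversions of w as a permutation of sgnset d,
   only one is counted. *)
definition invC :: "nat \<Rightarrow> (int \<Rightarrow> int) \<Rightarrow> (int \<times> int) set" where
  "invC d w = {(a, b) \<in> sgnset d \<times> sgnset d. a < b \<and> 0 \<le> a + b \<and> w b < w a}"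

definition ninvC :: "nat \<Rightarrow> (int \<Rightarrow> int) \<Rightarrow> nat" where
  "ninvC d w = card (invC d w)"

lemma finite_invC [simp]: "finite (invC d w)"
  by (rule finite_subset[of _ "sgnset d \<times> sgnset d"]) (auto simp: invC_def)

lemma ninvC_id: "ninvC d id = 0"
proof -
  have "invC d id = {}"
    by (auto simp: invC_def)
  then show ?thesis
    by (simp add: ninvC_def)
qed

lemma sref_sref [simp]: "sref i (sref i x) = x"
  by (auto simp: sref_def)

lemma sref_WC:
  assumes "i < d"
  shows "sref i \<in> WC d"
proof -
  have "bij_betw (sref i) (sgnset d) (sgnset d)"
    by (rule bij_betw_byWitness[where f'="sref i"]) (use assms in \<open>auto simp: sref_def sgnset_def\<close>)
  moreover have "sref i (- x) = - sref i x" for x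
    by (auto simp: sref_def)
  moreover have "x \<notin> sgnset d \<Longrightarrow> sref i x = x" for x
    using assms by (auto simp: sref_def sgnset_def)
  ultimately show ?thesis
    by (simp add: WC_def)
qed

definition sref_pair :: "nat \<Rightarrow> int \<Rightarrow> int \<Rightarrow> bool" where
  "sref_pair i u u' = (if i = 0 then u = -1 \<and> u' = 1
      else (u = int i \<and> u' = int i + 1) \<or> (u = - int i - 1 \<and> u' = - int i))"

lemma sref_less_iff:
  "u < u' \<Longrightarrow> u \<noteq> 0 \<Longrightarrow> u' \<noteq> 0 \<Longrightarrow> sref i u' < sref i u \<longleftrightarrow> sref_pair i u u'"
  unfolding sref_def sref_pair_def by auto

lemma sref_pair_less: "sref_pair i u u' \<Longrightarrow> u < u'"
  unfolding sref_pair_def by (auto split: if_splits)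

definition sref_flips :: "nat \<Rightarrow> nat \<Rightarrow> (int \<Rightarrow> int) \<Rightarrow> (int \<times> int) set" where
  "sref_flips d i w = {(a, b) \<in> sgnset d \<times> sgnset d. a < b \<and> 0 \<le> a + b \<and>
      (sref_pair i (w a) (w b) \<or> sref_pair i (w b) (w a))}"

lemma invC_sref_comp:
  assumes w: "w \<in> WC d"
  shows "invC d (sref i \<circ> w) = (invC d w - sref_flips d i w) \<union> (sref_flips d i w - invC d w)"
proof -
  have "sref i (w b) < sref i (w a) \<longleftrightarrow>
      (w b < w a) \<noteq> (sref_pair i (w a) (w b) \<or> sref_pair i (w b) (w a))"
    if "a \<in> sgnset d" "b \<in> sgnset d" "a < b" for a b
  proof -
    have nz: "w a \<noteq> 0" "w b \<noteq> 0"
      using WC_mem[OF w] that by (metis zero_notin_sgnset)+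
    have "w a \<noteq> w b"
      using WC_eq_iff[OF w] that by auto
    then consider "w a < w b" | "w b < w a"
      by linarith
    then show ?thesis
    proof cases
      case 1
      then show ?thesis
        using sref_less_iff[of "w a" "w b" i] nz sref_pair_less[of i "w b" "w a"] by auto
    next
      case 2
      have "sref i (w a) \<noteq> sref i (w b)"
        by (metis sref_sref \<open>w a \<noteq> w b\<close>)
      then show ?thesis
        using 2 sref_less_iff[of "w b" "w a" i] nz sref_pair_less[of i "w a" "w b"] by auto
    qed
  qed
  then show ?thesis
    unfolding invC_def sref_flips_def by auto
qed

lemma sref_flips_0:
  assumes w: "w \<in> WC d" and p: "p \<in> sgnset d" "w p = 1"
  shows "sref_flips d 0 w = {(- \<bar>p\<bar>, \<bar>p\<bar>)}"
proof -
  have "w (- p) = -1"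
    using WC_odd[OF w] p by simp
  then have "x \<in> sgnset d \<Longrightarrow> w x = 1 \<longleftrightarrow> x = p" "x \<in> sgnset d \<Longrightarrow> w x = -1 \<longleftrightarrow> x = - p" for x
    using WC_eq_iff[OF w] p by metis+
  moreover have "p \<noteq> 0"
    using p by auto
  ultimately show ?thesis
    using p \<open>w (- p) = -1\<close> by (auto simp: sref_flips_def sref_pair_def abs_if)
qed

lemma sref_flips_pos:
  assumes w: "w \<in> WC d" and i: "0 < i"
    and p: "p \<in> sgnset d" "w p = int i" and q: "q \<in> sgnset d" "w q = int i + 1"
  shows "sref_flips d i w = {if 0 < p + q then (min p q, max p q) else (- max p q, - min p q)}"
proof -
  have wm: "w (- p) = - int i" "w (- q) = - int i - 1"
    using WC_odd[OF w] p q by simp_all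
  have val: "x \<in> sgnset d \<Longrightarrow> w x = int i \<longleftrightarrow> x = p" "x \<in> sgnset d \<Longrightarrow> w x = int i + 1 \<longleftrightarrow> x = q"
    "x \<in> sgnset d \<Longrightarrow> w x = - int i \<longleftrightarrow> x = - p" "x \<in> sgnset d \<Longrightarrow> w x = - int i - 1 \<longleftrightarrow> x = - q"
    for x
    using WC_eq_iff[OF w] p q wm by metis+
  have "p \<noteq> q"
    using p q by auto
  moreover have "p + q \<noteq> 0"
  proof
    assume "p + q = 0"
    then have "q = - p"
      by simp
    then show False
      using wm(1) q(2) by simp
  qed
  ultimately show ?thesis
    using i p q wm val by (auto simp: sref_flips_def sref_pair_def min_def max_def)
qed

lemma sref_flips_singleton:
  assumes w: "w \<in> WC d" and i: "i < d"
  obtains e where "sref_flips d i w = {e}"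
proof -
  have preimage: "inv w x \<in> sgnset d" "w (inv w x) = x" if "x \<in> sgnset d" for x
    using WC_mem[OF WC_inv[OF w] that] w by simp_all
  show ?thesis
  proof (cases "i = 0")
    case True
    have "1 \<in> sgnset d"
      using i by (auto simp: sgnset_def)
    then show ?thesis
      using sref_flips_0[OF w preimage] True that by blast
  next
    case False
    have "int i \<in> sgnset d" "int i + 1 \<in> sgnset d"
      using i False by (auto simp: sgnset_def)
    then show ?thesis
      using sref_flips_pos[OF w _ preimage preimage] False that by blast
  qed
qed

lemma ninvC_sref_comp:
  assumes w: "w \<in> WC d" and e: "sref_flips d i w = {e}"
  shows "e \<in> invC d w \<Longrightarrow> ninvC d (sref i \<circ> w) + 1 = ninvC d w"
    and "e \<notin> invC d w \<Longrightarrow> ninvC d (sref i \<circ> w) = ninvC d w + 1"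
proof -
  have eq: "invC d (sref i \<circ> w) = (invC d w - {e}) \<union> ({e} - invC d w)"
    using invC_sref_comp[OF w, of i] unfolding e .
  show "ninvC d (sref i \<circ> w) + 1 = ninvC d w" if "e \<in> invC d w"
  proof -
    have "invC d (sref i \<circ> w) = invC d w - {e}"
      using eq that by blast
    then show ?thesis
      using card_Suc_Diff1[OF finite_invC that] by (simp add: ninvC_def)
  qed
  show "ninvC d (sref i \<circ> w) = ninvC d w + 1" if "e \<notin> invC d w"
  proof -
    have "invC d (sref i \<circ> w) = insert e (invC d w)"
      using eq that by blast
    then show ?thesis
      using that by (simp add: ninvC_def)
  qed
qed

lemma ninvC_sref_step:
  assumes "w \<in> WC d" "i < d"
  shows "ninvC d (sref i \<circ> w) + 1 = ninvC d w \<or> ninvC d (sref i \<circ> w) = ninvC d w + 1"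
proof -
  obtain e where e: "sref_flips d i w = {e}"
    using sref_flips_singleton[OF assms] .
  show ?thesis
    using ninvC_sref_comp[OF assms(1) e] by blast
qed

lemma ninvC_sref0_less_iff:
  assumes w: "w \<in> WC d" and p: "p \<in> sgnset d" "w p = 1"
  shows "ninvC d (sref 0 \<circ> w) < ninvC d w \<longleftrightarrow> p < 0"
proof -
  have "w (- p) = -1"
    using WC_odd[OF w] p by simp
  then have "(- \<bar>p\<bar>, \<bar>p\<bar>) \<in> invC d w \<longleftrightarrow> p < 0"
    using p by (cases "p < 0") (auto simp: invC_def)
  then show ?thesis
    using ninvC_sref_comp[OF w sref_flips_0[OF w p]]
    by (cases "(- \<bar>p\<bar>, \<bar>p\<bar>) \<in> invC d w") auto
qed

lemma ninvC_sref_less_iff: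
  assumes w: "w \<in> WC d" and i: "0 < i"
    and p: "p \<in> sgnset d" "w p = int i" and q: "q \<in> sgnset d" "w q = int i + 1"
  shows "ninvC d (sref i \<circ> w) < ninvC d w \<longleftrightarrow> q < p"
proof -
  let ?e = "if 0 < p + q then (min p q, max p q) else (- max p q, - min p q)"
  have "w (- p) = - int i" "w (- q) = - int i - 1"
    using WC_odd[OF w] p q by simp_all
  moreover have "p \<noteq> q"
    using p q by auto
  ultimately have "?e \<in> invC d w \<longleftrightarrow> q < p"
    using p q by (auto simp: invC_def min_def max_def)
  then show ?thesis
    using ninvC_sref_comp[OF w sref_flips_pos[OF w i p q]] by (cases "?e \<in> invC d w") auto
qed

lemma WC_fixes_pos_if_increasing:
  assumes g: "g \<in> WC d"
    and pos: "0 < d \<Longrightarrow> 0 < g 1"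
    and inc: "\<And>k. 1 \<le> k \<Longrightarrow> k < d \<Longrightarrow> g (int k) < g (int k + 1)"
    and k: "1 \<le> k" "k \<le> d"
  shows "g (int k) = int k"
proof -
  have lower: "1 \<le> k \<Longrightarrow> k \<le> d \<Longrightarrow> int k \<le> g (int k)" for k
  proof (induction k)
    case (Suc k)
    show ?case
    proof (cases "k = 0")
      case True
      then show ?thesis
        using Suc.prems pos by simp
    next
      case False
      then show ?thesis
        using Suc inc[of k] by (simp add: add.commute)
    qed
  qed simp
  have upper: "m < d \<Longrightarrow> g (int (d - m)) \<le> int (d - m)" for m
  proof (induction m)
    case 0
    have "g (int d) \<in> sgnset d"
      using 0 by (intro WC_mem[OF g]) (simp add: sgnset_def)
    then show ?case
      by (simp add: sgnset_def)
  next
    case (Suc m)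
    have "g (int (d - Suc m)) < g (int (d - Suc m) + 1)"
      using Suc.prems by (intro inc) auto
    moreover have "int (d - Suc m) + 1 = int (d - m)"
      using Suc.prems by auto
    ultimately show ?case
      using Suc by auto
  qed
  show ?thesis
    using lower[OF k] upper[of "d - k"] k by simp
qed

lemma WC_eq_id_if_fixes_pos:
  assumes g: "g \<in> WC d" and fixed: "\<And>k. 1 \<le> k \<Longrightarrow> k \<le> d \<Longrightarrow> g (int k) = int k"
  shows "g = id"
proof
  fix x
  show "g x = id x"
  proof (cases "x \<in> sgnset d")
    case False
    then show ?thesis
      using WC_fixes[OF g] by simp
  next
    case True
    then have "g \<bar>x\<bar> = \<bar>x\<bar>"
      using fixed[of "nat \<bar>x\<bar>"] by (auto simp: sgnset_def)
    then show ?thesis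
      using WC_odd[OF g, of "\<bar>x\<bar>"] by (cases "0 \<le> x") auto
  qed
qed

lemma WC_eq_id_if_no_descent:
  assumes w: "w \<in> WC d" and no_descent: "\<And>i. i < d \<Longrightarrow> \<not> ninvC d (sref i \<circ> w) < ninvC d w"
  shows "w = id"
proof -
  have S: "1 \<le> k \<Longrightarrow> k \<le> d \<Longrightarrow> inv w (int k) \<in> sgnset d" for k
    by (intro WC_mem[OF WC_inv[OF w]]) (simp add: sgnset_def)
  have "inv w = id"
  proof (rule WC_eq_id_if_fixes_pos[OF WC_inv[OF w]])
    fix k :: nat assume "1 \<le> k" "k \<le> d"
    then show "inv w (int k) = int k"
    proof (rule WC_fixes_pos_if_increasing[OF WC_inv[OF w], rotated 2])
      show "0 < inv w 1" if "0 < d"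
        using ninvC_sref0_less_iff[OF w S[of 1]] no_descent[of 0] that S[of 1] w
        by (simp add: sgnset_def)
      show "inv w (int k) < inv w (int k + 1)" if "1 \<le> k" "k < d" for k
        using ninvC_sref_less_iff[OF w _ S[of k] _ S[of "k + 1"]] no_descent[of k] that w
          WC_eq_iff[OF WC_inv[OF w], of "int k" "int k + 1"] by (simp add: add.commute)
    qed
  qed
  then show ?thesis
    using w by (metis WC_apply_inv id_apply eq_id_iff)
qed

definition sword :: "nat list \<Rightarrow> int \<Rightarrow> int" where
  "sword ws = foldr (\<lambda>i f. sref i \<circ> f) ws id"

lemma sword_WC_ninvC_le:
  "set ws \<subseteq> {0..<d} \<Longrightarrow> sword ws \<in> WC d \<and> ninvC d (sword ws) \<le> length ws"
proof (induction ws)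
  case Nil
  have "sword [] = id"
    by (simp add: sword_def)
  then show ?case
    using WC_id ninvC_id by (metis le0 list.size(3))
next
  case (Cons i ws)
  then have IH: "sword ws \<in> WC d" "ninvC d (sword ws) \<le> length ws" and i: "i < d"
    by auto
  have "sword (i # ws) = sref i \<circ> sword ws"
    by (simp add: sword_def)
  moreover have "ninvC d (sref i \<circ> sword ws) \<le> length (i # ws)"
    using ninvC_sref_step[OF IH(1) i] IH(2) by auto
  ultimately show ?case
    using WC_comp[OF sref_WC[OF i] IH(1)] by metis
qed

lemma ex_reduced_sword:
  "w \<in> WC d \<Longrightarrow> ninvC d w = n \<Longrightarrow> \<exists>ws. length ws = n \<and> set ws \<subseteq> {0..<d} \<and> w = sword ws"
proof (induction n arbitrary: w)
  case 0
  then have "w = id"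
    by (intro WC_eq_id_if_no_descent) auto
  then show ?case
    by (auto simp: sword_def)
next
  case (Suc n)
  have "w \<noteq> id"
    using Suc.prems(2) ninvC_id by (metis Zero_not_Suc)
  then obtain i where i: "i < d" "ninvC d (sref i \<circ> w) < ninvC d w"
    using WC_eq_id_if_no_descent[OF Suc.prems(1)] by blast
  then have "ninvC d (sref i \<circ> w) = n"
    using ninvC_sref_step[OF Suc.prems(1) i(1)] Suc.prems(2) by auto
  then obtain ws where ws: "length ws = n" "set ws \<subseteq> {0..<d}" "sref i \<circ> w = sword ws"
    using Suc.IH[OF WC_comp[OF sref_WC[OF i(1)] Suc.prems(1)]] by blast
  have "w = sref i \<circ> (sref i \<circ> w)"
    by (simp add: fun_eq_iff)
  then have "w = sword (i # ws)"
    using ws by (simp add: sword_def)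
  then show ?case
    using ws i by (intro exI[of _ "i # ws"]) auto
qed

lemma lenC_eq_ninvC:
  assumes "w \<in> WC d"
  shows "lenC d w = ninvC d w"
  unfolding lenC_def sword_def[symmetric]
proof (rule Least_equality)
  show "\<exists>ws. length ws = ninvC d w \<and> set ws \<subseteq> {0..<d} \<and> w = sword ws"
    using ex_reduced_sword[OF assms refl] .
  show "ninvC d w \<le> k" if "\<exists>ws. length ws = k \<and> set ws \<subseteq> {0..<d} \<and> w = sword ws" for k
    using that sword_WC_ninvC_le by blast
qed

lemma card_less_pairs:
  fixes X :: "'a::linorder set"
  assumes X: "finite X"
  shows "2 * card {(a, b) \<in> X \<times> X. a < b} + card X = card X * card X"
proof -
  let ?L = "{(a, b) \<in> X \<times> X. a < b}"
  let ?G = "{(a, b) \<in> X \<times> X. b < a}"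
  let ?D = "{(a, b) \<in> X \<times> X. a = b}"
  have fin: "finite ?L" "finite ?G" "finite ?D"
    by (rule finite_subset[of _ "X \<times> X"]; use X in auto)+
  have "X \<times> X = ?L \<union> ?G \<union> ?D"
    by auto
  moreover have "card ((?L \<union> ?G) \<union> ?D) = card (?L \<union> ?G) + card ?D"
    using fin by (intro card_Un_disjoint) auto
  ultimately have "card (X \<times> X) = card (?L \<union> ?G) + card ?D"
    by metis
  also have "card (?L \<union> ?G) = card ?L + card ?G"
    using fin by (intro card_Un_disjoint) auto
  finally have "card (X \<times> X) = card ?L + card ?G + card ?D" .
  moreover have "?G = prod.swap ` ?L"
    by (auto simp: image_iff)
  then have "card ?G = card ?L"
    by (simp add: card_image)
  moreover have "?D = (\<lambda>a. (a, a)) ` X"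
    by auto
  then have "card ?D = card X"
    by (simp add: card_image inj_on_def)
  ultimately show ?thesis
    by (simp add: card_cartesian_product)
qed

definition noninv :: "nat \<Rightarrow> (int \<Rightarrow> int) \<Rightarrow> (int \<times> int) set" where
  "noninv d w = {(a, b) \<in> sgnset d \<times> sgnset d. a < b \<and> w a < w b}"

definition negpos :: "nat \<Rightarrow> (int \<Rightarrow> int) \<Rightarrow> int set" where
  "negpos d w = {a \<in> sgnset d. 0 < a \<and> w a < 0}"

lemma finite_noninv [simp]: "finite (noninv d w)"
  by (rule finite_subset[of _ "sgnset d \<times> sgnset d"]) (auto simp: noninv_def)

lemma card_less_pairs_sgnset: "card {(a, b) \<in> sgnset d \<times> sgnset d. a < b} = d * (2 * d - 1)"
proof -
  have "2 * card {(a, b) \<in> sgnset d \<times> sgnset d. a < b} = 2 * d * (2 * d) - 2 * d"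
    using card_less_pairs[of "sgnset d"] by (simp add: card_sgnset)
  then show ?thesis
    by (simp add: diff_mult_distrib2)
qed

lemma card_inversions_neg_sum:
  assumes w: "w \<in> WC d"
  shows "card {(a, b) \<in> sgnset d \<times> sgnset d. a < b \<and> a + b < 0 \<and> w b < w a}
    = card {(a, b) \<in> sgnset d \<times> sgnset d. a < b \<and> 0 < a + b \<and> w b < w a}"
    (is "card ?Neg = card ?Pos")
proof -
  have "?Neg = (\<lambda>(a, b). (- b, - a)) ` ?Pos"
  proof
    show "?Neg \<subseteq> (\<lambda>(a, b). (- b, - a)) ` ?Pos"
    proof
      fix x assume "x \<in> ?Neg"
      then obtain a b where "x = (a, b)" "(- b, - a) \<in> ?Pos"
        using WC_odd[OF w] by auto
      then show "x \<in> (\<lambda>(a, b). (- b, - a)) ` ?Pos"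
        by (auto intro: image_eqI[of _ _ "(- b, - a)"])
    qed
    show "(\<lambda>(a, b). (- b, - a)) ` ?Pos \<subseteq> ?Neg"
      using WC_odd[OF w] by auto
  qed
  moreover have "inj_on (\<lambda>(a, b). (- b, - a)) ?Pos"
    by (auto simp: inj_on_def)
  ultimately show ?thesis
    by (simp add: card_image)
qed

lemma card_inversions_zero_sum:
  assumes w: "w \<in> WC d"
  shows "card {(a, b) \<in> sgnset d \<times> sgnset d. a < b \<and> a + b = 0 \<and> w b < w a} = card (negpos d w)"
    (is "card ?Zero = _")
proof -
  have "?Zero = (\<lambda>b. (- b, b)) ` negpos d w"
  proof
    show "?Zero \<subseteq> (\<lambda>b. (- b, b)) ` negpos d w"
    proof
      fix x assume "x \<in> ?Zero"
      then obtain a b where x: "x = (a, b)" "b \<in> sgnset d" "a < b" "a = - b" "w b < w a"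
        by (auto simp: eq_neg_iff_add_eq_0)
      then have "b \<in> negpos d w"
        using WC_odd[OF w, of b] by (simp add: negpos_def)
      then show "x \<in> (\<lambda>b. (- b, b)) ` negpos d w"
        using x by blast
    qed
    show "(\<lambda>b. (- b, b)) ` negpos d w \<subseteq> ?Zero"
      using WC_odd[OF w] by (auto simp: negpos_def)
  qed
  then show ?thesis
    by (simp add: card_image inj_on_def)
qed

lemma ninvC_noninv_identity:
  assumes w: "w \<in> WC d"
  shows "2 * ninvC d w + card (noninv d w) = d * (2 * d - 1) + card (negpos d w)"
proof -
  let ?S = "sgnset d"
  define Inv where "Inv = {(a, b) \<in> ?S \<times> ?S. a < b \<and> w b < w a}"
  define Pos where "Pos = {(a, b) \<in> ?S \<times> ?S. a < b \<and> 0 < a + b \<and> w b < w a}"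
  define Neg where "Neg = {(a, b) \<in> ?S \<times> ?S. a < b \<and> a + b < 0 \<and> w b < w a}"
  define Zero where "Zero = {(a, b) \<in> ?S \<times> ?S. a < b \<and> a + b = 0 \<and> w b < w a}"
  have fin: "finite Inv" "finite Pos" "finite Neg" "finite Zero"
    unfolding Inv_def Pos_def Neg_def Zero_def
    by (rule finite_subset[of _ "?S \<times> ?S"]; auto)+
  have "{(a, b) \<in> ?S \<times> ?S. a < b} = Inv \<union> noninv d w"
    using WC_eq_iff[OF w] by (auto simp: Inv_def noninv_def) (metis less_irrefl not_less_iff_gr_or_eq)
  moreover have "card (Inv \<union> noninv d w) = card Inv + card (noninv d w)"
    by (intro card_Un_disjoint fin(1) finite_noninv) (auto simp: Inv_def noninv_def)
  ultimately have "card Inv + card (noninv d w) = d * (2 * d - 1)"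
    using card_less_pairs_sgnset[of d] by metis
  moreover have "card Inv = card Pos + card Neg + card Zero"
  proof -
    have "Inv = (Pos \<union> Neg) \<union> Zero"
      by (auto simp: Inv_def Pos_def Neg_def Zero_def)
    moreover have "card ((Pos \<union> Neg) \<union> Zero) = card (Pos \<union> Neg) + card Zero"
      using fin by (intro card_Un_disjoint) (auto simp: Pos_def Neg_def Zero_def)
    moreover have "card (Pos \<union> Neg) = card Pos + card Neg"
      using fin by (intro card_Un_disjoint) (auto simp: Pos_def Neg_def)
    ultimately show ?thesis
      by simp
  qed
  moreover have "ninvC d w = card Pos + card Zero"
  proof -
    have "invC d w = Pos \<union> Zero"
      by (auto simp: invC_def Pos_def Zero_def)
    moreover have "card (Pos \<union> Zero) = card Pos + card Zero"
      using fin by (intro card_Un_disjoint) (auto simp: Pos_def Zero_def)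
    ultimately show ?thesis
      by (simp add: ninvC_def)
  qed
  moreover have "card Neg = card Pos"
    unfolding Neg_def Pos_def by (rule card_inversions_neg_sum[OF w])
  moreover have "card Zero = card (negpos d w)"
    unfolding Zero_def by (rule card_inversions_zero_sum[OF w])
  ultimately show ?thesis
    by simp
qed

section \<open>Offsets in a finite chain and symmetric compositions\<close>

definition offset :: "'c set \<Rightarrow> ('c \<Rightarrow> 'c \<Rightarrow> bool) \<Rightarrow> ('c \<Rightarrow> nat) \<Rightarrow> 'c \<Rightarrow> nat" where
  "offset X R w c = (\<Sum>c'\<in>{c' \<in> X. R c' c}. w c')"

locale finite_strict_order =
  fixes X :: "'c set" and R :: "'c \<Rightarrow> 'c \<Rightarrow> bool"
  assumes finite: "finite X"
    and irrefl: "\<And>c. \<not> R c c"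
    and trans: "\<And>a b c. a \<in> X \<Longrightarrow> b \<in> X \<Longrightarrow> c \<in> X \<Longrightarrow> R a b \<Longrightarrow> R b c \<Longrightarrow> R a c"
    and total: "\<And>a b. a \<in> X \<Longrightarrow> b \<in> X \<Longrightarrow> a \<noteq> b \<Longrightarrow> R a b \<or> R b a"
begin

lemma offset_add_eq_sum_insert:
  "offset X R w c + w c = (\<Sum>x\<in>insert c {x \<in> X. R x c}. w x)"
  using finite irrefl by (simp add: offset_def add.commute)

lemma offset_add_le:
  assumes "c \<in> X" "c' \<in> X" "R c c'"
  shows "offset X R w c + w c \<le> offset X R w c'"
proof -
  have "insert c {x \<in> X. R x c} \<subseteq> {x \<in> X. R x c'}"
    using assms trans[of _ c c'] by auto
  then have "(\<Sum>x\<in>insert c {x \<in> X. R x c}. w x) \<le> (\<Sum>x\<in>{x \<in> X. R x c'}. w x)"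
    by (intro sum_mono2) (use finite in auto)
  then show ?thesis
    unfolding offset_add_eq_sum_insert by (simp add: offset_def)
qed

lemma offset_add_le_sum:
  assumes "c \<in> X"
  shows "offset X R w c + w c \<le> sum w X"
  unfolding offset_add_eq_sum_insert
  by (rule sum_mono2) (use finite assms in auto)

lemma offset_intervals_disjoint:
  assumes "c \<in> X" "c' \<in> X" "c \<noteq> c'"
  shows "{offset X R w c..<offset X R w c + w c} \<inter> {offset X R w c'..<offset X R w c' + w c'} = {}"
  using total[OF assms] offset_add_le[of c c' w] offset_add_le[of c' c w] assms by auto

lemma offset_interval_unique:
  assumes "c \<in> X" "c' \<in> X"
    and "offset X R w c \<le> k" "k < offset X R w c + w c"
    and "offset X R w c' \<le> k" "k < offset X R w c' + w c'"
  shows "c = c'"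
  using offset_intervals_disjoint[of c c' w] assms by auto

lemma ex_offset_interval:
  assumes "k < sum w X"
  shows "\<exists>c\<in>X. offset X R w c \<le> k \<and> k < offset X R w c + w c"
proof -
  let ?I = "\<lambda>c. {offset X R w c..<offset X R w c + w c}"
  have sub: "(\<Union>c\<in>X. ?I c) \<subseteq> {0..<sum w X}"
  proof
    fix k assume "k \<in> (\<Union>c\<in>X. ?I c)"
    then obtain c where "c \<in> X" "k < offset X R w c + w c"
      by auto
    then show "k \<in> {0..<sum w X}"
      using offset_add_le_sum[of c w] by auto
  qed
  have "card (\<Union>c\<in>X. ?I c) = (\<Sum>c\<in>X. card (?I c))"
    by (rule card_UN_disjoint) (use finite offset_intervals_disjoint in auto)
  also have "\<dots> = sum w X"
    by simp
  finally have "(\<Union>c\<in>X. ?I c) = {0..<sum w X}"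
    using sub by (intro card_subset_eq) auto
  then have "k \<in> (\<Union>c\<in>X. ?I c)"
    using assms by simp
  then show ?thesis
    by auto
qed

lemma sum_eq_offset_add_sum_above:
  assumes c: "c \<in> X"
  shows "sum w X = offset X R w c + w c + sum w {c' \<in> X. R c c'}"
proof -
  have "X = insert c {c' \<in> X. R c' c} \<union> {c' \<in> X. R c c'}"
    using total c by blast
  then have "sum w X = sum w (insert c {c' \<in> X. R c' c} \<union> {c' \<in> X. R c c'})"
    by (rule arg_cong)
  also have "\<dots> = sum w (insert c {c' \<in> X. R c' c}) + sum w {c' \<in> X. R c c'}"
    using finite irrefl trans[of _ c] c by (intro sum.union_disjoint) auto
  finally show ?thesis
    unfolding offset_add_eq_sum_insert .
qed

lemma offset_reflect:
  assumes ng: "\<And>c. c \<in> X \<Longrightarrow> ng c \<in> X" "\<And>c. c \<in> X \<Longrightarrow> ng (ng c) = c"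
    and R_ng: "\<And>c c'. c \<in> X \<Longrightarrow> c' \<in> X \<Longrightarrow> R c' (ng c) \<longleftrightarrow> R c (ng c')"
    and w_ng: "\<And>c. c \<in> X \<Longrightarrow> w (ng c) = w c"
    and c: "c \<in> X"
  shows "offset X R w (ng c) + offset X R w c + w c = sum w X"
proof -
  let ?above = "{c' \<in> X. R c c'}"
  have "{c' \<in> X. R c' (ng c)} = ng ` ?above"
  proof
    show "{c' \<in> X. R c' (ng c)} \<subseteq> ng ` ?above"
    proof
      fix x assume x: "x \<in> {c' \<in> X. R c' (ng c)}"
      then have "ng x \<in> ?above"
        using R_ng[OF c, of x] ng(1) by simp
      then show "x \<in> ng ` ?above"
        using x ng(2) by (metis (no_types, lifting) image_eqI mem_Collect_eq)
    qed
    show "ng ` ?above \<subseteq> {c' \<in> X. R c' (ng c)}"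
    proof
      fix x assume "x \<in> ng ` ?above"
      then obtain y where y: "x = ng y" "y \<in> X" "R c y"
        by auto
      then have "R (ng y) (ng c)"
        using R_ng[OF c ng(1)[OF y(2)]] ng(2)[OF y(2)] by simp
      then show "x \<in> {c' \<in> X. R c' (ng c)}"
        using y ng(1) by simp
    qed
  qed
  moreover have "inj_on ng ?above"
    by (rule inj_onI) (metis ng(2) mem_Collect_eq)
  ultimately have "offset X R w (ng c) = sum (w \<circ> ng) ?above"
    unfolding offset_def by (simp add: sum.reindex)
  also have "\<dots> = sum w ?above"
    by (rule sum.cong) (auto simp: w_ng)
  finally show ?thesis
    using sum_eq_offset_add_sum_above[OF c, of w] by linarith
qed

end

lemma Idx_uminus_iff [simp]: "- i \<in> Idx r \<longleftrightarrow> i \<in> Idx r"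
  by (auto simp: Idx_def)

lemma zero_notin_Idx [simp]: "0 \<notin> Idx r"
  by (simp add: Idx_def)

lemma finite_Idx [simp]: "finite (Idx r)"
  by (simp add: Idx_def)

lemma uminus_image_Idx: "uminus ` Idx r = Idx r"
proof
  show "Idx r \<subseteq> uminus ` Idx r"
  proof
    fix x assume "x \<in> Idx r"
    then show "x \<in> uminus ` Idx r"
      by (intro image_eqI[of _ _ "- x"]) auto
  qed
qed auto

lemma Idx_split_sign: "Idx r = {i \<in> Idx r. i < 0} \<union> {i \<in> Idx r. 0 < i}"
  by (auto simp: Idx_def)

lemma uminus_image_Idx_pos: "uminus ` {i \<in> Idx r. 0 < i} = {i \<in> Idx r. i < 0}"
proof
  show "{i \<in> Idx r. i < 0} \<subseteq> uminus ` {i \<in> Idx r. 0 < i}"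
  proof
    fix x assume "x \<in> {i \<in> Idx r. i < 0}"
    then show "x \<in> uminus ` {i \<in> Idx r. 0 < i}"
      by (intro image_eqI[of _ _ "- x"]) auto
  qed
qed auto

lemma finite_strict_order_Idx: "finite_strict_order (Idx r) (<)"
  by unfold_locales auto

lemma finite_Rset [simp]: "finite (Rset lam i)"
  by (simp add: Rset_def Rpos_def)

locale sym_composition =
  fixes r d :: nat and lam :: "int \<Rightarrow> nat"
  assumes lam_uminus: "\<And>i. i \<in> Idx r \<Longrightarrow> lam (- i) = lam i"
    and sum_lam: "sum lam (Idx r) = 2 * d"
begin

definition block_start :: "int \<Rightarrow> nat" where
  "block_start i = offset (Idx r) (<) lam i"

lemma block_end_le: "i \<in> Idx r \<Longrightarrow> block_start i + lam i \<le> 2 * d"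
  using finite_strict_order.offset_add_le_sum[OF finite_strict_order_Idx] sum_lam
  unfolding block_start_def by metis

lemma block_end_le_start:
  "i \<in> Idx r \<Longrightarrow> i' \<in> Idx r \<Longrightarrow> i < i' \<Longrightarrow> block_start i + lam i \<le> block_start i'"
  using finite_strict_order.offset_add_le[OF finite_strict_order_Idx]
  unfolding block_start_def by metis

lemma block_start_uminus:
  assumes "i \<in> Idx r"
  shows "block_start (- i) + block_start i + lam i = 2 * d"
proof -
  have "offset (Idx r) (<) lam (- i) + offset (Idx r) (<) lam i + lam i = sum lam (Idx r)"
    by (rule finite_strict_order.offset_reflect[OF finite_strict_order_Idx])
      (auto simp: lam_uminus assms)
  then show ?thesis
    using sum_lam by (simp add: block_start_def)
qed

lemma sum_lam_neg: "sum lam {i \<in> Idx r. i < 0} = d"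
proof -
  have "sum lam {i \<in> Idx r. i < 0} = sum (lam \<circ> uminus) {i \<in> Idx r. 0 < i}"
    unfolding uminus_image_Idx_pos[symmetric] by (simp add: sum.reindex)
  also have "\<dots> = sum lam {i \<in> Idx r. 0 < i}"
    by (rule sum.cong) (auto simp: lam_uminus)
  finally have "sum lam {i \<in> Idx r. i < 0} = sum lam {i \<in> Idx r. 0 < i}" .
  moreover have "sum lam (Idx r) = sum lam {i \<in> Idx r. i < 0} + sum lam {i \<in> Idx r. 0 < i}"
    by (subst Idx_split_sign, rule sum.union_disjoint) auto
  ultimately show ?thesis
    using sum_lam by linarith
qed

lemma block_start_pos:
  assumes "i \<in> Idx r" "0 < i"
  shows "block_start i = d + (\<Sum>k\<in>{1..i - 1}. lam k)"
proof -
  have "{x \<in> Idx r. x < i} = {x \<in> Idx r. x < 0} \<union> {1..i - 1}"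
    using assms by (auto simp: Idx_def)
  then have "block_start i = sum lam ({x \<in> Idx r. x < 0} \<union> {1..i - 1})"
    by (simp add: block_start_def offset_def)
  also have "\<dots> = sum lam {x \<in> Idx r. x < 0} + sum lam {1..i - 1}"
    by (rule sum.union_disjoint) auto
  finally show ?thesis
    using sum_lam_neg by simp
qed

lemma Rset_eq_block_pos:
  assumes i: "i \<in> Idx r" "0 < i"
  shows "Rset lam i = sgn_nth d ` {block_start i..<block_start i + lam i}"
proof -
  define s where "s = (\<Sum>k\<in>{1..i - 1}. lam k)"
  have "{1..i} = insert i {1..i - 1}"
    using i by auto
  then have "(\<Sum>k\<in>{1..i}. lam k) = s + lam i"
    by (simp add: s_def add.commute)
  then have "Rset lam i = {int s + 1 .. int s + int (lam i)}"
    using i by (simp add: Rset_def Rpos_def s_def)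
  then show ?thesis
    using sgn_nth_image_upper[of d s "lam i"] block_end_le[OF i(1)] block_start_pos[OF i]
    by (simp add: s_def)
qed

lemma Rset_eq_block:
  assumes i: "i \<in> Idx r"
  shows "Rset lam i = sgn_nth d ` {block_start i..<block_start i + lam i}"
proof (cases "0 < i")
  case True
  then show ?thesis
    using Rset_eq_block_pos i by simp
next
  case False
  then have neg: "- i \<in> Idx r" "0 < - i"
    using i by (auto simp: Idx_def)
  have "Rset lam i = uminus ` Rset lam (- i)"
    using False neg by (simp add: Rset_def)
  also have "\<dots> = uminus ` sgn_nth d ` {block_start (- i)..<block_start (- i) + lam (- i)}"
    using Rset_eq_block_pos[OF neg] by simp
  also have "\<dots> = sgn_nth d ` {2 * d - (block_start (- i) + lam (- i))..<2 * d - block_start (- i)}"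
    by (rule uminus_sgn_nth_image[OF block_end_le[OF neg(1)]])
  also have "2 * d - (block_start (- i) + lam (- i)) = block_start i"
    using block_start_uminus[OF neg(1)] by simp
  also have "2 * d - block_start (- i) = block_start i + lam i"
    using block_start_uminus[OF neg(1)] lam_uminus[OF i] by simp
  finally show ?thesis .
qed

lemma Rset_subset_sgnset: "i \<in> Idx r \<Longrightarrow> Rset lam i \<subseteq> sgnset d"
  using Rset_eq_block block_end_le sgn_nth_in_sgnset by fastforce

lemma card_Rset:
  assumes "i \<in> Idx r"
  shows "card (Rset lam i) = lam i"
proof -
  have "inj_on (sgn_nth d) {block_start i..<block_start i + lam i}"
    by (rule inj_on_subset[OF inj_on_sgn_nth]) (use block_end_le[OF assms] in auto)
  then show ?thesis
    using Rset_eq_block[OF assms] by (simp add: card_image)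
qed

lemma Rset_less:
  assumes "i \<in> Idx r" "i' \<in> Idx r" "i < i'" "a \<in> Rset lam i" "b \<in> Rset lam i'"
  shows "a < b"
proof -
  obtain k where k: "k \<in> {block_start i..<block_start i + lam i}" "a = sgn_nth d k"
    using assms(1,4) Rset_eq_block by auto
  obtain k' where k': "k' \<in> {block_start i'..<block_start i' + lam i'}" "b = sgn_nth d k'"
    using assms(2,5) Rset_eq_block by auto
  have "k < k'"
    using k(1) k'(1) block_end_le_start[OF assms(1-3)] by auto
  moreover have "k' < 2 * d"
    using k'(1) block_end_le[OF assms(2)] by auto
  ultimately show ?thesis
    using k(2) k'(2) by (simp add: sgn_nth_less_iff)
qed

lemma Rset_unique:
  "i \<in> Idx r \<Longrightarrow> i' \<in> Idx r \<Longrightarrow> a \<in> Rset lam i \<Longrightarrow> a \<in> Rset lam i' \<Longrightarrow> i = i'"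
  using Rset_less[of i i' a a] Rset_less[of i' i a a] by (cases i i' rule: linorder_cases) auto

lemma Rset_cover:
  assumes "a \<in> sgnset d"
  obtains i where "i \<in> Idx r" "a \<in> Rset lam i"
proof -
  obtain k where k: "k < 2 * d" "a = sgn_nth d k"
    using assms by (rule sgnset_nthE)
  have "\<exists>i\<in>Idx r. offset (Idx r) (<) lam i \<le> k \<and> k < offset (Idx r) (<) lam i + lam i"
    by (rule finite_strict_order.ex_offset_interval[OF finite_strict_order_Idx])
      (use k sum_lam in simp)
  then obtain i where i: "i \<in> Idx r" "block_start i \<le> k" "k < block_start i + lam i"
    unfolding block_start_def by blast
  then have "a \<in> Rset lam i"
    using Rset_eq_block k(2) by auto
  then show ?thesis
    using that i(1) by blast
qed

lemma Rset_uminus: "i \<in> Idx r \<Longrightarrow> Rset lam (- i) = uminus ` Rset lam i"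
  by (cases "0 < i") (auto simp: Rset_def image_image)

lemma Rset_pos_iff:
  assumes "i \<in> Idx r" "a \<in> Rset lam i"
  shows "0 < a \<longleftrightarrow> 0 < i"
proof -
  have "0 \<le> (\<Sum>k = 1..i - 1. int (lam k))" "0 \<le> (\<Sum>k = 1..- i - 1. int (lam k))"
    by (auto intro: sum_nonneg)
  then show ?thesis
    using assms by (cases "0 < i") (auto simp: Rset_def Rpos_def)
qed

end

section \<open>Cells of a matrix and the permutation tilde y_A\<close>

lemma sorted_wrt_concat_map_map:
  assumes "sorted_wrt Q xs" "sorted_wrt P ys"
    and "\<And>a a' b b'. Q a a' \<Longrightarrow> R (f a b) (f a' b')"
    and "\<And>a b b'. P b b' \<Longrightarrow> R (f a b) (f a b')"
  shows "sorted_wrt R (concat (map (\<lambda>a. map (f a) ys) xs))"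
  using assms(1)
proof (induction xs)
  case (Cons a xs)
  have "sorted_wrt R (map (f a) ys)"
    unfolding sorted_wrt_map by (rule sorted_wrt_mono_rel[OF _ assms(2)]) (use assms(4) in blast)
  moreover have "\<forall>x\<in>set (map (f a) ys). \<forall>y\<in>set (concat (map (\<lambda>a. map (f a) ys) xs)). R x y"
    using Cons.prems assms(3) by auto
  ultimately show ?case
    using Cons by (simp add: sorted_wrt_append)
qed simp

lemma sorted_wrt_irrefl_distinct: "sorted_wrt R xs \<Longrightarrow> (\<And>x. \<not> R x x) \<Longrightarrow> distinct xs"
  by (induction xs) auto

lemma set_takeWhile_neq_sorted:
  assumes "sorted_wrt R xs" "c \<in> set xs" "\<And>x. \<not> R x x"
    and "\<And>x y. x \<in> set xs \<Longrightarrow> y \<in> set xs \<Longrightarrow> R x y \<Longrightarrow> \<not> R y x"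
  shows "set (takeWhile (\<lambda>x. x \<noteq> c) xs) = {x \<in> set xs. R x c}"
  using assms
proof (induction xs)
  case (Cons y ys)
  show ?case
  proof (cases "y = c")
    case True
    have "\<not> R x c" if "x \<in> set ys" for x
    proof -
      have "R c x"
        using that True Cons.prems(1) by simp
      then show ?thesis
        using that Cons.prems(2,4) by (meson list.set_intros(2))
    qed
    then show ?thesis
      using True Cons.prems(3) by auto
  next
    case False
    then have c: "c \<in> set ys" and "R y c"
      using Cons.prems(1,2) by auto
    have "sorted_wrt R ys"
      using Cons.prems(1) by simp
    moreover have "\<And>x z. x \<in> set ys \<Longrightarrow> z \<in> set ys \<Longrightarrow> R x z \<Longrightarrow> \<not> R z x"
      using Cons.prems(4) by (meson list.set_intros(2))
    ultimately have "set (takeWhile (\<lambda>x. x \<noteq> c) ys) = {x \<in> set ys. R x c}"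
      using Cons.IH c Cons.prems(3) by blast
    then show ?thesis
      using False \<open>R y c\<close> by auto
  qed
qed simp

lemma sum_list_takeWhile_neq_sorted:
  assumes "sorted_wrt R xs" "c \<in> set xs" "\<And>x. \<not> R x x"
    and "\<And>x y. x \<in> set xs \<Longrightarrow> y \<in> set xs \<Longrightarrow> R x y \<Longrightarrow> \<not> R y x"
  shows "sum_list (map g (takeWhile (\<lambda>x. x \<noteq> c) xs)) = (\<Sum>x\<in>{x \<in> set xs. R x c}. g x)"
proof -
  have "distinct (takeWhile (\<lambda>x. x \<noteq> c) xs)"
    using sorted_wrt_irrefl_distinct[OF assms(1,3)] by (rule distinct_takeWhile)
  then show ?thesis
    using set_takeWhile_neq_sorted[OF assms] by (simp add: sum_list_distinct_conv_sum_set)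
qed

lemma nth_concat_map_takeWhile:
  assumes "distinct xs" "c \<in> set xs" "t < length (f c)"
  shows "concat (map f xs) ! (sum_list (map (length \<circ> f) (takeWhile (\<lambda>x. x \<noteq> c) xs)) + t)
    = f c ! t"
  using assms
proof (induction xs)
  case (Cons y ys)
  then show ?case
    by (cases "y = c") (auto simp: nth_append add.assoc)
qed simp

definition fill_before :: "int \<times> int \<Rightarrow> int \<times> int \<Rightarrow> bool" where
  "fill_before c c' \<longleftrightarrow> fst c < fst c' \<or> (fst c = fst c' \<and> snd c' < snd c)"

definition read_before :: "int \<times> int \<Rightarrow> int \<times> int \<Rightarrow> bool" where
  "read_before c c' \<longleftrightarrow> snd c < snd c' \<or> (snd c = snd c' \<and> fst c' < fst c)"

lemma set_Idxl: "set (Idxl r) = Idx r"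
  by (auto simp: Idxl_def Idx_def)

lemma sorted_Idxl: "sorted_wrt (<) (Idxl r)"
  by (auto simp: Idxl_def sorted_wrt_append sorted_wrt_upto)

lemma sorted_fill_cells: "sorted_wrt fill_before (fill_cells r)"
  unfolding fill_cells_def
  by (rule sorted_wrt_concat_map_map[OF sorted_Idxl sorted_Idxl[THEN sorted_wrt_rev[THEN iffD2]]])
    (auto simp: fill_before_def)

lemma sorted_read_cells: "sorted_wrt read_before (read_cells r)"
  unfolding read_cells_def
  by (rule sorted_wrt_concat_map_map[OF sorted_Idxl sorted_Idxl[THEN sorted_wrt_rev[THEN iffD2]]])
    (auto simp: read_before_def)

lemma set_fill_cells: "set (fill_cells r) = Idx r \<times> Idx r"
  by (auto simp: fill_cells_def set_Idxl)

lemma set_read_cells: "set (read_cells r) = Idx r \<times> Idx r"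
  by (auto simp: read_cells_def set_Idxl)

lemma distinct_read_cells: "distinct (read_cells r)"
  using sorted_read_cells by (rule sorted_wrt_irrefl_distinct) (simp add: read_before_def)

lemma finite_strict_order_fill_before: "finite_strict_order (Idx r \<times> Idx r) fill_before"
  by unfold_locales (auto simp: fill_before_def)

lemma finite_strict_order_read_before: "finite_strict_order (Idx r \<times> Idx r) read_before"
  by unfold_locales (auto simp: read_before_def)

lemma Wpar_if_maps_into:
  assumes u: "u \<in> WC d" and into: "\<And>i. i \<in> Idx r \<Longrightarrow> u ` Rset lam i \<subseteq> Rset lam i"
  shows "u \<in> Wpar r d lam"
  unfolding Wpar_def
proof (intro CollectI conjI ballI)
  fix i assume "i \<in> Idx r"
  then show "u ` Rset lam i = Rset lam i"
    using into card_image[OF WC_inj[OF u]] by (intro card_subset_eq) auto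
qed (rule u)

lemma sum_uminus_Idx: "(\<Sum>i\<in>Idx r. f (- i)) = (\<Sum>i\<in>Idx r. f i)"
  by (rule sum.reindex_bij_witness[of _ uminus uminus]) auto

locale pi_matrix =
  fixes r d :: nat and A :: "int \<Rightarrow> int \<Rightarrow> nat"
  assumes A_uminus: "\<And>i j. i \<in> Idx r \<Longrightarrow> j \<in> Idx r \<Longrightarrow> A (- i) (- j) = A i j"
    and sum_A: "(\<Sum>i\<in>Idx r. \<Sum>j\<in>Idx r. A i j) = 2 * d"
begin

lemma ro_uminus:
  assumes "i \<in> Idx r"
  shows "ro r A (- i) = ro r A i"
proof -
  have "ro r A (- i) = (\<Sum>j\<in>Idx r. A (- i) (- j))"
    unfolding ro_def by (rule sum_uminus_Idx[of "A (- i)", symmetric])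
  then show ?thesis
    using assms by (simp add: ro_def A_uminus)
qed

lemma co_uminus:
  assumes "j \<in> Idx r"
  shows "co r A (- j) = co r A j"
proof -
  have "co r A (- j) = (\<Sum>i\<in>Idx r. A (- i) (- j))"
    unfolding co_def by (rule sum_uminus_Idx[of "\<lambda>i. A i (- j)", symmetric])
  then show ?thesis
    using assms by (simp add: co_def A_uminus)
qed

sublocale rows: sym_composition r d "ro r A"
  by unfold_locales (simp add: ro_uminus, simp add: ro_def sum_A)

sublocale cols: sym_composition r d "co r A"
proof
  show "sum (co r A) (Idx r) = 2 * d"
    unfolding co_def by (subst sum.swap) (rule sum_A)
qed (simp add: co_uminus)

abbreviation Cells :: "(int \<times> int) set" where
  "Cells \<equiv> Idx r \<times> Idx r"

definition read_offset :: "int \<times> int \<Rightarrow> nat" where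
  "read_offset = offset Cells read_before (case_prod A)"

definition fill_offset :: "int \<times> int \<Rightarrow> nat" where
  "fill_offset = offset Cells fill_before (case_prod A)"

lemma sum_A_Cells: "sum (case_prod A) Cells = 2 * d"
  using sum_A by (simp add: sum.cartesian_product)

lemma read_offset_bound: "(i, j) \<in> Cells \<Longrightarrow> read_offset (i, j) + A i j \<le> 2 * d"
  using finite_strict_order.offset_add_le_sum[OF finite_strict_order_read_before, of "(i, j)" r "case_prod A"]
    sum_A_Cells by (simp add: read_offset_def)

lemma fill_offset_bound: "(i, j) \<in> Cells \<Longrightarrow> fill_offset (i, j) + A i j \<le> 2 * d"
  using finite_strict_order.offset_add_le_sum[OF finite_strict_order_fill_before, of "(i, j)" r "case_prod A"]
    sum_A_Cells by (simp add: fill_offset_def)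

lemma read_offset_le:
  "c \<in> Cells \<Longrightarrow> c' \<in> Cells \<Longrightarrow> read_before c c' \<Longrightarrow> read_offset c + case_prod A c \<le> read_offset c'"
  unfolding read_offset_def by (rule finite_strict_order.offset_add_le[OF finite_strict_order_read_before])

lemma fill_offset_le:
  "c \<in> Cells \<Longrightarrow> c' \<in> Cells \<Longrightarrow> fill_before c c' \<Longrightarrow> fill_offset c + case_prod A c \<le> fill_offset c'"
  unfolding fill_offset_def by (rule finite_strict_order.offset_add_le[OF finite_strict_order_fill_before])

lemma read_offset_uminus:
  assumes "(i, j) \<in> Cells"
  shows "read_offset (- i, - j) + read_offset (i, j) + A i j = 2 * d"
proof -
  have "offset Cells read_before (case_prod A) ((\<lambda>(i, j). (- i, - j)) (i, j))
      + offset Cells read_before (case_prod A) (i, j) + case_prod A (i, j) = sum (case_prod A) Cells"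
    by (rule finite_strict_order.offset_reflect[OF finite_strict_order_read_before])
      (use assms in \<open>auto simp: read_before_def A_uminus\<close>)
  then show ?thesis
    using sum_A_Cells by (simp add: read_offset_def)
qed

lemma fill_offset_uminus:
  assumes "(i, j) \<in> Cells"
  shows "fill_offset (- i, - j) + fill_offset (i, j) + A i j = 2 * d"
proof -
  have "offset Cells fill_before (case_prod A) ((\<lambda>(i, j). (- i, - j)) (i, j))
      + offset Cells fill_before (case_prod A) (i, j) + case_prod A (i, j) = sum (case_prod A) Cells"
    by (rule finite_strict_order.offset_reflect[OF finite_strict_order_fill_before])
      (use assms in \<open>auto simp: fill_before_def A_uminus\<close>)
  then show ?thesis
    using sum_A_Cells by (simp add: fill_offset_def)
qed

lemma read_offset_eq:
  assumes "i \<in> Idx r" "j \<in> Idx r"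
  shows "read_offset (i, j) = cols.block_start j + (\<Sum>x\<in>{x \<in> Idx r. i < x}. A x j)"
proof -
  let ?P = "Idx r \<times> {y \<in> Idx r. y < j}"
  let ?Q = "{x \<in> Idx r. i < x} \<times> {j}"
  have "{c \<in> Cells. read_before c (i, j)} = ?P \<union> ?Q"
    using assms by (auto simp: read_before_def)
  then have "read_offset (i, j) = sum (case_prod A) (?P \<union> ?Q)"
    by (simp add: read_offset_def offset_def)
  also have "\<dots> = sum (case_prod A) ?P + sum (case_prod A) ?Q"
    by (rule sum.union_disjoint) auto
  also have "sum (case_prod A) ?P = (\<Sum>y\<in>{y \<in> Idx r. y < j}. \<Sum>x\<in>Idx r. A x y)"
    by (simp add: sum.cartesian_product[symmetric]) (rule sum.swap)
  also have "\<dots> = cols.block_start j"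
    by (simp add: cols.block_start_def offset_def co_def)
  finally show ?thesis
    by (simp add: sum.cartesian_product[symmetric])
qed

lemma fill_offset_eq:
  assumes "i \<in> Idx r" "j \<in> Idx r"
  shows "fill_offset (i, j) = rows.block_start i + (\<Sum>y\<in>{y \<in> Idx r. j < y}. A i y)"
proof -
  let ?P = "{x \<in> Idx r. x < i} \<times> Idx r"
  let ?Q = "{i} \<times> {y \<in> Idx r. j < y}"
  have "{c \<in> Cells. fill_before c (i, j)} = ?P \<union> ?Q"
    using assms by (auto simp: fill_before_def)
  then have "fill_offset (i, j) = sum (case_prod A) (?P \<union> ?Q)"
    by (simp add: fill_offset_def offset_def)
  also have "\<dots> = sum (case_prod A) ?P + sum (case_prod A) ?Q"
    by (rule sum.union_disjoint) auto
  also have "sum (case_prod A) ?P = rows.block_start i"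
    by (simp add: rows.block_start_def offset_def ro_def sum.cartesian_product[symmetric])
  finally show ?thesis
    by (simp add: sum.cartesian_product[symmetric])
qed

lemma sum_gt_add_le:
  assumes "i \<in> Idx r"
  shows "(\<Sum>x\<in>{x \<in> Idx r. i < x}. f x) + f i \<le> (\<Sum>x\<in>Idx r. f x :: nat)"
proof -
  have "(\<Sum>x\<in>{x \<in> Idx r. i < x}. f x) + f i = sum f (insert i {x \<in> Idx r. i < x})"
    by simp
  also have "\<dots> \<le> sum f (Idx r)"
    by (rule sum_mono2) (use assms in auto)
  finally show ?thesis .
qed

lemma read_offset_in_col_block:
  assumes "(i, j) \<in> Cells"
  shows "cols.block_start j \<le> read_offset (i, j)"
    and "read_offset (i, j) + A i j \<le> cols.block_start j + co r A j"
  using assms read_offset_eq[of i j] sum_gt_add_le[of i "\<lambda>x. A x j"] by (auto simp: co_def)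

lemma fill_offset_in_row_block:
  assumes "(i, j) \<in> Cells"
  shows "rows.block_start i \<le> fill_offset (i, j)"
    and "fill_offset (i, j) + A i j \<le> rows.block_start i + ro r A i"
  using assms fill_offset_eq[of i j] sum_gt_add_le[of j "\<lambda>y. A i y"] by (auto simp: ro_def)

lemma cell_offset_eq: "(i, j) \<in> Cells \<Longrightarrow> cell_offset r A i j = fill_offset (i, j)"
  unfolding cell_offset_def fill_offset_def offset_def
  by (subst sum_list_takeWhile_neq_sorted[OF sorted_fill_cells])
    (auto simp: set_fill_cells fill_before_def)

lemma length_cell_content:
  assumes "(i, j) \<in> Cells"
  shows "length (cell_content r d A i j) = A i j"
  using fill_offset_bound[OF assms] by (simp add: cell_content_def cell_offset_eq[OF assms])

lemma nth_cell_content: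
  assumes "(i, j) \<in> Cells" "t < A i j"
  shows "cell_content r d A i j ! t = sgn_nth d (fill_offset (i, j) + (A i j - 1 - t))"
  using assms fill_offset_bound[OF assms(1)]
  by (simp add: cell_content_def cell_offset_eq rev_nth)

lemma length_zseq: "length (zseq r d A) = 2 * d"
proof -
  have "length (zseq r d A) = (\<Sum>c\<in>set (read_cells r). length (case_prod (cell_content r d A) c))"
    by (simp add: zseq_def length_concat sum_list_distinct_conv_sum_set distinct_read_cells
        comp_def case_prod_beta)
  also have "\<dots> = sum (case_prod A) Cells"
    by (rule sum.cong) (auto simp: set_read_cells length_cell_content)
  finally show ?thesis
    using sum_A_Cells by simp
qed

lemma nth_zseq:
  assumes c: "(i, j) \<in> Cells" and t: "t < A i j"
  shows "zseq r d A ! (read_offset (i, j) + t) = sgn_nth d (fill_offset (i, j) + (A i j - 1 - t))"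
proof -
  let ?cc = "case_prod (cell_content r d A)"
  have "sum_list (map (length \<circ> ?cc) (takeWhile (\<lambda>x. x \<noteq> (i, j)) (read_cells r)))
      = (\<Sum>x\<in>{x \<in> Cells. read_before x (i, j)}. (length \<circ> ?cc) x)"
    by (subst sum_list_takeWhile_neq_sorted[OF sorted_read_cells])
      (use c in \<open>auto simp: set_read_cells read_before_def\<close>)
  also have "\<dots> = read_offset (i, j)"
    unfolding read_offset_def offset_def by (rule sum.cong) (auto simp: length_cell_content)
  finally have "zseq r d A ! (read_offset (i, j) + t) = concat (map ?cc (read_cells r)) !
      (sum_list (map (length \<circ> ?cc) (takeWhile (\<lambda>x. x \<noteq> (i, j)) (read_cells r))) + t)"
    by (simp add: zseq_def)
  also have "\<dots> = ?cc (i, j) ! t"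
    by (rule nth_concat_map_takeWhile[OF distinct_read_cells])
      (use c t in \<open>auto simp: set_read_cells length_cell_content\<close>)
  finally show ?thesis
    using nth_cell_content[OF c t] by simp
qed

abbreviation ytA :: "int \<Rightarrow> int" where
  "ytA \<equiv> ytilde r d A"

lemma ytA_sgn_nth: "k < 2 * d \<Longrightarrow> ytA (sgn_nth d k) = zseq r d A ! k"
  using map_of_zip_nth[of "sgnl d" "zseq r d A" k] distinct_sgnl length_zseq
  by (simp add: ytilde_def)

lemma ytA_fixes:
  assumes "x \<notin> sgnset d"
  shows "ytA x = x"
proof -
  have "fst ` set (zip (sgnl d) (zseq r d A)) = sgnset d"
    using length_zseq by (metis length_sgnl map_fst_zip set_map set_sgnl)
  then have "map_of (zip (sgnl d) (zseq r d A)) x = None"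
    using assms by (simp add: map_of_eq_None_iff)
  then show ?thesis
    by (simp add: ytilde_def)
qed

(* The t-th letter of cell (i, j) in reading order was filled, from right to left, as the
   (A i j - 1 - t)-th letter of the cell. *)
lemma ytA_cell:
  assumes "(i, j) \<in> Cells" "t < A i j"
  shows "ytA (sgn_nth d (read_offset (i, j) + t)) = sgn_nth d (fill_offset (i, j) + (A i j - 1 - t))"
  using assms read_offset_bound[OF assms(1)] ytA_sgn_nth nth_zseq by simp

lemma sgnset_cellE:
  assumes "x \<in> sgnset d"
  obtains i j t where "(i, j) \<in> Cells" "t < A i j" "x = sgn_nth d (read_offset (i, j) + t)"
proof -
  obtain k where k: "k < 2 * d" "x = sgn_nth d k"
    using assms by (rule sgnset_nthE)
  have "\<exists>c\<in>Cells. read_offset c \<le> k \<and> k < read_offset c + case_prod A c"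
    unfolding read_offset_def
    by (rule finite_strict_order.ex_offset_interval[OF finite_strict_order_read_before])
      (use k sum_A_Cells in simp)
  then obtain i j where "(i, j) \<in> Cells" "read_offset (i, j) \<le> k" "k < read_offset (i, j) + A i j"
    by auto
  then show ?thesis
    using that[of i j "k - read_offset (i, j)"] k by auto
qed

lemma read_position_bound: "(i, j) \<in> Cells \<Longrightarrow> t < A i j \<Longrightarrow> read_offset (i, j) + t < 2 * d"
  using read_offset_bound[of i j] by simp

lemma fill_position_bound:
  "(i, j) \<in> Cells \<Longrightarrow> t < A i j \<Longrightarrow> fill_offset (i, j) + (A i j - 1 - t) < 2 * d"
  using fill_offset_bound[of i j] by simp

lemma ytA_mem:
  assumes "x \<in> sgnset d"
  shows "ytA x \<in> sgnset d"
proof -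
  obtain i j t where c: "(i, j) \<in> Cells" "t < A i j" "x = sgn_nth d (read_offset (i, j) + t)"
    using assms by (rule sgnset_cellE)
  then show ?thesis
    using ytA_cell[OF c(1,2)] sgn_nth_in_sgnset[OF fill_position_bound[OF c(1,2)]] by simp
qed

lemma inj_on_ytA: "inj_on ytA (sgnset d)"
proof
  fix x x' assume "x \<in> sgnset d" "x' \<in> sgnset d" and eq: "ytA x = ytA x'"
  obtain i j t where c: "(i, j) \<in> Cells" "t < A i j" "x = sgn_nth d (read_offset (i, j) + t)"
    using \<open>x \<in> sgnset d\<close> by (rule sgnset_cellE)
  obtain i' j' t' where c': "(i', j') \<in> Cells" "t' < A i' j'"
    "x' = sgn_nth d (read_offset (i', j') + t')"
    using \<open>x' \<in> sgnset d\<close> by (rule sgnset_cellE)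
  let ?k = "fill_offset (i, j) + (A i j - 1 - t)"
  have k: "?k = fill_offset (i', j') + (A i' j' - 1 - t')"
    using eq c(3) c'(3) ytA_cell[OF c(1,2)] ytA_cell[OF c'(1,2)]
      sgn_nth_eq_iff[OF fill_position_bound[OF c(1,2)] fill_position_bound[OF c'(1,2)]]
    by simp
  have "(i, j) = (i', j')"
    using k c(2) c'(2) finite_strict_order.offset_interval_unique[OF finite_strict_order_fill_before
        c(1) c'(1), of "case_prod A" ?k]
    by (simp add: fill_offset_def)
  moreover from this have "t = t'"
    using k c(2) c'(2) by simp
  ultimately show "x = x'"
    using c(3) c'(3) by simp
qed

lemma ytA_image: "ytA ` sgnset d = sgnset d"
  by (rule endo_inj_surj) (auto simp: ytA_mem inj_on_ytA)

lemma ytA_uminus: "ytA (- x) = - ytA x"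
proof (cases "x \<in> sgnset d")
  case False
  then show ?thesis
    by (simp add: ytA_fixes)
next
  case True
  then obtain i j t where c: "(i, j) \<in> Cells" "t < A i j" "x = sgn_nth d (read_offset (i, j) + t)"
    by (rule sgnset_cellE)
  have c': "(- i, - j) \<in> Cells" and A': "A (- i) (- j) = A i j"
    using c(1) A_uminus by auto
  have read: "read_offset (- i, - j) + read_offset (i, j) + A i j = 2 * d"
    using read_offset_uminus[OF c(1)] .
  have fill: "fill_offset (- i, - j) + fill_offset (i, j) + A i j = 2 * d"
    using fill_offset_uminus[OF c(1)] .
  have "- x = sgn_nth d (2 * d - 1 - (read_offset (i, j) + t))"
    using sgn_nth_reflect[of "read_offset (i, j) + t" d] c read by simp
  also have "2 * d - 1 - (read_offset (i, j) + t) = read_offset (- i, - j) + (A i j - 1 - t)"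
    using read c(2) by simp
  finally have "ytA (- x) = sgn_nth d (fill_offset (- i, - j) + t)"
    using ytA_cell[OF c', of "A i j - 1 - t"] A' c(2) by simp
  also have "fill_offset (- i, - j) + t = 2 * d - 1 - (fill_offset (i, j) + (A i j - 1 - t))"
    using fill c(2) by simp
  also have "sgn_nth d \<dots> = - ytA x"
    using sgn_nth_reflect[of "fill_offset (i, j) + (A i j - 1 - t)" d] fill_position_bound[OF c(1,2)]
      ytA_cell[OF c(1,2)] c(3) by simp
  finally show ?thesis .
qed

lemma ytA_WC: "ytA \<in> WC d"
  unfolding WC_def bij_betw_def using ytA_image inj_on_ytA ytA_uminus ytA_fixes by auto

section \<open>The double coset of A\<close>

abbreviation Rrow :: "int \<Rightarrow> int set" where
  "Rrow \<equiv> Rset (ro r A)"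

abbreviation Rcol :: "int \<Rightarrow> int set" where
  "Rcol \<equiv> Rset (co r A)"

definition DA :: "(int \<Rightarrow> int) set" where
  "DA = {v \<in> WC d. \<forall>i\<in>Idx r. \<forall>j\<in>Idx r. card (Rrow i \<inter> v ` Rcol j) = A i j}"

definition cell :: "(int \<Rightarrow> int) \<Rightarrow> int \<Rightarrow> int \<Rightarrow> int set" where
  "cell v i j = {a \<in> Rcol j. v a \<in> Rrow i}"

lemma finite_cell [simp]: "finite (cell v i j)"
  by (simp add: cell_def)

lemma card_cell:
  assumes "v \<in> WC d"
  shows "card (Rrow i \<inter> v ` Rcol j) = card (cell v i j)"
proof -
  have "Rrow i \<inter> v ` Rcol j = v ` cell v i j"
    by (auto simp: cell_def)
  then show ?thesis
    using WC_inj[OF assms] by (simp add: card_image)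
qed

lemma DA_iff: "v \<in> DA \<longleftrightarrow> v \<in> WC d \<and> (\<forall>i\<in>Idx r. \<forall>j\<in>Idx r. card (cell v i j) = A i j)"
  unfolding DA_def using card_cell by auto

lemma DA_WC: "v \<in> DA \<Longrightarrow> v \<in> WC d"
  by (simp add: DA_def)

lemma card_cell_DA: "v \<in> DA \<Longrightarrow> (i, j) \<in> Cells \<Longrightarrow> card (cell v i j) = A i j"
  by (simp add: DA_iff)

lemma cells_disjoint:
  assumes "c \<in> Cells" "c' \<in> Cells" "c \<noteq> c'"
  shows "case_prod (cell v) c \<inter> case_prod (cell v) c' = {}"
  using assms rows.Rset_unique cols.Rset_unique by (cases c, cases c') (fastforce simp: cell_def)

lemma cellE:
  assumes "v \<in> WC d" "a \<in> sgnset d"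
  obtains i j where "(i, j) \<in> Cells" "a \<in> cell v i j"
proof -
  obtain i where "i \<in> Idx r" "v a \<in> Rrow i"
    using rows.Rset_cover[OF WC_mem[OF assms]] .
  moreover obtain j where "j \<in> Idx r" "a \<in> Rcol j"
    using cols.Rset_cover[OF assms(2)] .
  ultimately show ?thesis
    using that by (auto simp: cell_def)
qed

definition nw_pairs :: "((int \<times> int) \<times> (int \<times> int)) set" where
  "nw_pairs = {(c, c') \<in> Cells \<times> Cells. fst c < fst c' \<and> snd c < snd c'}"

definition forced_noninv :: "(int \<Rightarrow> int) \<Rightarrow> (int \<times> int) set" where
  "forced_noninv v = (\<Union>(c, c')\<in>nw_pairs. case_prod (cell v) c \<times> case_prod (cell v) c')"

definition nw_weight :: nat where
  "nw_weight = (\<Sum>(c, c')\<in>nw_pairs. case_prod A c * case_prod A c')"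

lemma finite_nw_pairs: "finite nw_pairs"
  by (rule finite_subset[of _ "Cells \<times> Cells"]) (auto simp: nw_pairs_def)

lemma mem_forced_noninv:
  "(a, b) \<in> forced_noninv v \<longleftrightarrow> (\<exists>x y i j. (x, y) \<in> Cells \<and> (i, j) \<in> Cells \<and> x < i \<and> y < j \<and>
     a \<in> cell v x y \<and> b \<in> cell v i j)"
  by (force simp: forced_noninv_def nw_pairs_def)

lemma forced_noninv_subset:
  assumes "v \<in> WC d"
  shows "forced_noninv v \<subseteq> noninv d v"
proof
  fix z assume z: "z \<in> forced_noninv v"
  obtain a b where "z = (a, b)"
    by fastforce
  then obtain x y i j where idx: "(x, y) \<in> Cells" "(i, j) \<in> Cells" "x < i" "y < j"
    and ab: "a \<in> Rcol y" "v a \<in> Rrow x" "b \<in> Rcol j" "v b \<in> Rrow i"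
    using z unfolding \<open>z = (a, b)\<close> mem_forced_noninv cell_def by blast
  have "a < b" "v a < v b"
    using idx ab cols.Rset_less[of y j a b] rows.Rset_less[of x i "v a" "v b"] by auto
  moreover have "a \<in> sgnset d" "b \<in> sgnset d"
    using idx ab cols.Rset_subset_sgnset by auto
  ultimately show "z \<in> noninv d v"
    using \<open>z = (a, b)\<close> by (simp add: noninv_def)
qed

lemma card_forced_noninv:
  assumes v: "v \<in> DA"
  shows "card (forced_noninv v) = nw_weight"
proof -
  let ?F = "\<lambda>(c, c'). case_prod (cell v) c \<times> case_prod (cell v) c'"
  have "card (forced_noninv v) = (\<Sum>p\<in>nw_pairs. card (?F p))"
    unfolding forced_noninv_def
  proof (rule card_UN_disjoint[OF finite_nw_pairs])
    show "\<forall>p\<in>nw_pairs. \<forall>q\<in>nw_pairs. p \<noteq> q \<longrightarrow> ?F p \<inter> ?F q = {}"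
    proof (intro ballI impI)
      fix p q assume p: "p \<in> nw_pairs" and q: "q \<in> nw_pairs" and "p \<noteq> q"
      obtain c1 c2 c1' c2' where pq: "p = (c1, c2)" "q = (c1', c2')"
        by (cases p, cases q) blast
      then have "c1 \<in> Cells" "c2 \<in> Cells" "c1' \<in> Cells" "c2' \<in> Cells"
        using p q by (auto simp: nw_pairs_def)
      then show "?F p \<inter> ?F q = {}"
        using cells_disjoint[of c1 c1' v] cells_disjoint[of c2 c2' v] \<open>p \<noteq> q\<close> pq by auto
    qed
  qed (auto simp: case_prod_beta)
  also have "\<dots> = nw_weight"
    unfolding nw_weight_def
    by (rule sum.cong) (auto simp: nw_pairs_def card_cartesian_product card_cell_DA[OF v])
  finally show ?thesis .
qed

lemma nw_weight_le_card_noninv: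
  assumes "v \<in> DA"
  shows "nw_weight \<le> card (noninv d v)"
  using card_mono[OF finite_noninv forced_noninv_subset[OF DA_WC[OF assms]]]
    card_forced_noninv[OF assms] by simp

definition block_decreasing :: "(int \<Rightarrow> int) \<Rightarrow> bool" where
  "block_decreasing v \<longleftrightarrow>
     (\<forall>j\<in>Idx r. \<forall>a\<in>Rcol j. \<forall>b\<in>Rcol j. a < b \<longrightarrow> v b < v a) \<and>
     (\<forall>i\<in>Idx r. \<forall>a\<in>sgnset d. \<forall>b\<in>sgnset d. v a \<in> Rrow i \<longrightarrow> v b \<in> Rrow i \<longrightarrow> v a < v b \<longrightarrow> b < a)"

lemma block_decreasing_noninv_col_less:
  assumes dec: "block_decreasing v"
    and a: "(x, y) \<in> Cells" "a \<in> cell v x y" and b: "(i, j) \<in> Cells" "b \<in> cell v i j"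
    and ab: "a < b" "v a < v b"
  shows "y < j"
proof (rule ccontr)
  assume "\<not> y < j"
  then consider "j < y" | "j = y"
    by linarith
  then show False
  proof cases
    case 1
    then show False
      using cols.Rset_less[of j y b a] a b ab by (auto simp: cell_def)
  next
    case 2
    then have "v b < v a"
      using dec a b ab(1) unfolding block_decreasing_def cell_def by blast
    then show False
      using ab(2) by simp
  qed
qed

lemma block_decreasing_noninv_row_less:
  assumes dec: "block_decreasing v"
    and a: "(x, y) \<in> Cells" "a \<in> cell v x y" and b: "(i, j) \<in> Cells" "b \<in> cell v i j"
    and ab: "a \<in> sgnset d" "b \<in> sgnset d" "a < b" "v a < v b"
  shows "x < i"
proof (rule ccontr)
  assume "\<not> x < i"
  then consider "i < x" | "i = x"
    by linarith
  then show False
  proof cases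
    case 1
    then show False
      using rows.Rset_less[of i x "v b" "v a"] a b ab by (auto simp: cell_def)
  next
    case 2
    then have "b < a"
      using dec a b ab(1,2,4) unfolding block_decreasing_def cell_def by blast
    then show False
      using ab(3) by simp
  qed
qed

lemma noninv_subset_forced_noninv:
  assumes v: "v \<in> WC d" and dec: "block_decreasing v"
  shows "noninv d v \<subseteq> forced_noninv v"
proof
  fix z assume "z \<in> noninv d v"
  then obtain a b where z: "z = (a, b)" and ab: "a \<in> sgnset d" "b \<in> sgnset d" "a < b" "v a < v b"
    by (auto simp: noninv_def)
  obtain x y where xy: "(x, y) \<in> Cells" "a \<in> cell v x y"
    using v ab(1) by (rule cellE)
  obtain i j where ij: "(i, j) \<in> Cells" "b \<in> cell v i j"
    using v ab(2) by (rule cellE)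
  have "x < i" "y < j"
    using block_decreasing_noninv_row_less[OF dec xy ij ab]
      block_decreasing_noninv_col_less[OF dec xy ij ab(3,4)] by simp_all
  then show "z \<in> forced_noninv v"
    using xy ij z mem_forced_noninv by blast
qed

lemma block_decreasing_if_noninv_subset:
  assumes v: "v \<in> WC d" and sub: "noninv d v \<subseteq> forced_noninv v"
  shows "block_decreasing v"
  unfolding block_decreasing_def
proof (intro conjI ballI impI)
  fix j a b assume j: "j \<in> Idx r" and a: "a \<in> Rcol j" and b: "b \<in> Rcol j" and "a < b"
  show "v b < v a"
  proof (rule ccontr)
    assume "\<not> v b < v a"
    moreover have "v a \<noteq> v b"
      using WC_eq_iff[OF v] \<open>a < b\<close> by auto
    moreover have "a \<in> sgnset d" "b \<in> sgnset d"
      using a b j cols.Rset_subset_sgnset by auto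
    ultimately have "(a, b) \<in> forced_noninv v"
      using sub \<open>a < b\<close> by (auto simp: noninv_def)
    then obtain y j' where "y \<in> Idx r" "j' \<in> Idx r" "y < j'" "a \<in> Rcol y" "b \<in> Rcol j'"
      unfolding mem_forced_noninv cell_def by blast
    then show False
      using a b j cols.Rset_unique by (metis less_irrefl)
  qed
next
  fix i a b assume i: "i \<in> Idx r" and "a \<in> sgnset d" "b \<in> sgnset d"
    and va: "v a \<in> Rrow i" and vb: "v b \<in> Rrow i" and "v a < v b"
  show "b < a"
  proof (rule ccontr)
    assume "\<not> b < a"
    moreover have "a \<noteq> b"
      using \<open>v a < v b\<close> by auto
    ultimately have "(a, b) \<in> forced_noninv v"
      using sub \<open>a \<in> sgnset d\<close> \<open>b \<in> sgnset d\<close> \<open>v a < v b\<close> by (auto simp: noninv_def)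
    then obtain x i' where "x \<in> Idx r" "i' \<in> Idx r" "x < i'" "v a \<in> Rrow x" "v b \<in> Rrow i'"
      unfolding mem_forced_noninv cell_def by blast
    then show False
      using va vb i rows.Rset_unique by (metis less_irrefl)
  qed
qed

lemma block_decreasing_iff_card_noninv:
  assumes v: "v \<in> DA"
  shows "block_decreasing v \<longleftrightarrow> card (noninv d v) = nw_weight"
proof
  assume "block_decreasing v"
  then have "noninv d v = forced_noninv v"
    using noninv_subset_forced_noninv forced_noninv_subset DA_WC[OF v] by blast
  then show "card (noninv d v) = nw_weight"
    using card_forced_noninv[OF v] by simp
next
  assume "card (noninv d v) = nw_weight"
  then have "forced_noninv v = noninv d v"
    using card_forced_noninv[OF v] forced_noninv_subset[OF DA_WC[OF v]]
    by (intro card_subset_eq) simp_all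
  then show "block_decreasing v"
    using block_decreasing_if_noninv_subset[OF DA_WC[OF v]] by simp
qed

definition negpos_weight :: nat where
  "negpos_weight = (\<Sum>i\<in>{i \<in> Idx r. i < 0}. \<Sum>j\<in>{j \<in> Idx r. 0 < j}. A i j)"

lemma negpos_eq_UN_cells:
  assumes v: "v \<in> WC d"
  shows "negpos d v = (\<Union>c\<in>{i \<in> Idx r. i < 0} \<times> {j \<in> Idx r. 0 < j}. case_prod (cell v) c)"
    (is "_ = (\<Union>c\<in>?N. _)")
proof
  show "negpos d v \<subseteq> (\<Union>c\<in>?N. case_prod (cell v) c)"
  proof
    fix a assume "a \<in> negpos d v"
    then have a: "a \<in> sgnset d" "0 < a" "v a < 0"
      by (auto simp: negpos_def)
    obtain i j where ij: "(i, j) \<in> Cells" "a \<in> cell v i j"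
      using v a(1) by (rule cellE)
    then have "(i, j) \<in> ?N"
      using a rows.Rset_pos_iff[of i "v a"] cols.Rset_pos_iff[of j a] by (auto simp: cell_def Idx_def)
    then show "a \<in> (\<Union>c\<in>?N. case_prod (cell v) c)"
      using ij(2) by force
  qed
  show "(\<Union>c\<in>?N. case_prod (cell v) c) \<subseteq> negpos d v"
  proof
    fix a assume "a \<in> (\<Union>c\<in>?N. case_prod (cell v) c)"
    then obtain i j where ij: "i \<in> Idx r" "j \<in> Idx r" "i < 0" "0 < j" "a \<in> Rcol j" "v a \<in> Rrow i"
      by (auto simp: cell_def)
    then have "a \<in> sgnset d"
      using cols.Rset_subset_sgnset by auto
    moreover have "v a \<noteq> 0"
      using WC_mem[OF v \<open>a \<in> sgnset d\<close>] by auto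
    ultimately show "a \<in> negpos d v"
      using ij rows.Rset_pos_iff[of i "v a"] cols.Rset_pos_iff[of j a] by (auto simp: negpos_def)
  qed
qed

lemma card_negpos:
  assumes v: "v \<in> DA"
  shows "card (negpos d v) = negpos_weight"
proof -
  let ?N = "{i \<in> Idx r. i < 0} \<times> {j \<in> Idx r. 0 < j}"
  have "card (negpos d v) = (\<Sum>c\<in>?N. card (case_prod (cell v) c))"
    unfolding negpos_eq_UN_cells[OF DA_WC[OF v]]
  proof (rule card_UN_disjoint)
    show "\<forall>c\<in>?N. \<forall>c'\<in>?N. c \<noteq> c' \<longrightarrow> case_prod (cell v) c \<inter> case_prod (cell v) c' = {}"
    proof (intro ballI impI)
      fix c c' assume "c \<in> ?N" "c' \<in> ?N" "c \<noteq> c'"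
      then show "case_prod (cell v) c \<inter> case_prod (cell v) c' = {}"
        by (intro cells_disjoint) auto
    qed
  qed (auto simp: case_prod_beta)
  also have "\<dots> = (\<Sum>c\<in>?N. case_prod A c)"
    by (rule sum.cong) (auto simp: card_cell_DA[OF v])
  also have "\<dots> = negpos_weight"
    by (simp add: negpos_weight_def sum.cartesian_product)
  finally show ?thesis .
qed

lemma ninvC_DA: "v \<in> DA \<Longrightarrow> 2 * ninvC d v + card (noninv d v) = d * (2 * d - 1) + negpos_weight"
  using ninvC_noninv_identity[OF DA_WC] card_negpos by simp

lemma card_UN_cell_column:
  assumes v: "v \<in> DA" and j: "j \<in> Idx r" and I: "I \<subseteq> Idx r"
  shows "card (\<Union>x\<in>I. cell v x j) = (\<Sum>x\<in>I. A x j)"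
proof -
  have "card (\<Union>x\<in>I. cell v x j) = (\<Sum>x\<in>I. card (cell v x j))"
  proof (rule card_UN_disjoint)
    show "finite I"
      using I by (rule finite_subset) simp
    show "\<forall>x\<in>I. \<forall>x'\<in>I. x \<noteq> x' \<longrightarrow> cell v x j \<inter> cell v x' j = {}"
    proof (intro ballI impI)
      fix x x' assume "x \<in> I" "x' \<in> I" "x \<noteq> x'"
      then show "cell v x j \<inter> cell v x' j = {}"
        using cells_disjoint[of "(x, j)" "(x', j)" v] I j by auto
    qed
  qed simp
  also have "\<dots> = (\<Sum>x\<in>I. A x j)"
    using I j by (intro sum.cong refl card_cell_DA[OF v]) auto
  finally show ?thesis .
qed

lemma cells_above_subset_less:
  assumes dec: "block_decreasing v" and a: "(x, j) \<in> Cells" "a \<in> cell v x j"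
  shows "(\<Union>y\<in>{y \<in> Idx r. x < y}. cell v y j) \<subseteq> {b \<in> Rcol j. b < a}"
proof
  fix b assume "b \<in> (\<Union>y\<in>{y \<in> Idx r. x < y}. cell v y j)"
  then obtain y where y: "y \<in> Idx r" "x < y" "b \<in> Rcol j" "v b \<in> Rrow y"
    by (auto simp: cell_def)
  have "v a < v b"
    using rows.Rset_less[OF _ y(1,2) _ y(4)] a by (auto simp: cell_def)
  then have "\<not> v b < v a" "a \<noteq> b"
    by auto
  then have "b < a"
    using dec a y(3) unfolding block_decreasing_def cell_def by (metis (no_types, lifting)
        linorder_neqE mem_Collect_eq mem_Sigma_iff)
  then show "b \<in> {b \<in> Rcol j. b < a}"
    using y by simp
qed

lemma less_subset_cells_weakly_above:
  assumes v: "v \<in> WC d" "block_decreasing v" and a: "(x, j) \<in> Cells" "a \<in> cell v x j"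
  shows "{b \<in> Rcol j. b < a} \<subseteq> (\<Union>y\<in>{y \<in> Idx r. x \<le> y}. cell v y j) - {a}"
proof
  fix b assume "b \<in> {b \<in> Rcol j. b < a}"
  then have b: "b \<in> Rcol j" "b < a"
    by auto
  have "v a < v b"
    using v(2) a b unfolding block_decreasing_def cell_def by blast
  obtain y where y: "y \<in> Idx r" "v b \<in> Rrow y"
    using rows.Rset_cover[OF WC_mem[OF v(1)]] cols.Rset_subset_sgnset a(1) b(1) by blast
  then have "x \<le> y"
    using rows.Rset_less[OF y(1) _ _ y(2), of x "v a"] \<open>v a < v b\<close> a
    by (auto simp: cell_def) (meson less_asym not_le)
  then show "b \<in> (\<Union>y\<in>{y \<in> Idx r. x \<le> y}. cell v y j) - {a}"
    using y b by (auto simp: cell_def)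
qed

(* The number of letters of Rcol j below a pins down the row block of v a. *)
lemma card_less_in_column:
  assumes v: "v \<in> DA" "block_decreasing v" and a: "(x, j) \<in> Cells" "a \<in> cell v x j"
  shows "(\<Sum>y\<in>{y \<in> Idx r. x < y}. A y j) \<le> card {b \<in> Rcol j. b < a}"
    and "card {b \<in> Rcol j. b < a} < (\<Sum>y\<in>{y \<in> Idx r. x \<le> y}. A y j)"
proof -
  have j: "j \<in> Idx r"
    using a(1) by simp
  have "card (\<Union>y\<in>{y \<in> Idx r. x < y}. cell v y j) \<le> card {b \<in> Rcol j. b < a}"
    using cells_above_subset_less[OF v(2) a] by (intro card_mono) auto
  then show "(\<Sum>y\<in>{y \<in> Idx r. x < y}. A y j) \<le> card {b \<in> Rcol j. b < a}"
    using card_UN_cell_column[OF v(1) j, of "{y \<in> Idx r. x < y}"] by simp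
  have "card {b \<in> Rcol j. b < a} \<le> card ((\<Union>y\<in>{y \<in> Idx r. x \<le> y}. cell v y j) - {a})"
    using less_subset_cells_weakly_above[OF DA_WC[OF v(1)] v(2) a] by (intro card_mono) auto
  also have "\<dots> < card (\<Union>y\<in>{y \<in> Idx r. x \<le> y}. cell v y j)"
    using a by (intro card_Diff1_less) auto
  finally show "card {b \<in> Rcol j. b < a} < (\<Sum>y\<in>{y \<in> Idx r. x \<le> y}. A y j)"
    using card_UN_cell_column[OF v(1) j, of "{y \<in> Idx r. x \<le> y}"] by simp
qed

lemma block_decreasing_same_row:
  assumes v: "v \<in> DA" "block_decreasing v" and w: "w \<in> DA" "block_decreasing w"
    and a: "a \<in> sgnset d" "x \<in> Idx r" "v a \<in> Rrow x" "x' \<in> Idx r" "w a \<in> Rrow x'"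
  shows "x = x'"
proof -
  obtain j where j: "j \<in> Idx r" "a \<in> Rcol j"
    using cols.Rset_cover[OF a(1)] .
  have "(x, j) \<in> Cells" "a \<in> cell v x j" "(x', j) \<in> Cells" "a \<in> cell w x' j"
    using a j by (auto simp: cell_def)
  note bounds = card_less_in_column[OF v this(1,2)] card_less_in_column[OF w this(3,4)]
  have mono: "(\<Sum>y\<in>{y \<in> Idx r. x' \<le> y}. A y j) \<le> (\<Sum>y\<in>{y \<in> Idx r. x < y}. A y j)"
    if "x < x'" for x x'
    by (rule sum_mono2) (use that in auto)
  show ?thesis
    using bounds mono[of x x'] mono[of x' x] by (cases x x' rule: linorder_cases) auto
qed

lemma block_decreasing_less_transfer:
  assumes v: "v \<in> DA" "block_decreasing v" and w: "w \<in> DA" "block_decreasing w"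
    and ab: "a \<in> sgnset d" "b \<in> sgnset d" "v a < v b"
  shows "w a < w b"
proof -
  obtain x where x: "x \<in> Idx r" "v a \<in> Rrow x"
    using rows.Rset_cover[OF WC_mem[OF DA_WC[OF v(1)] ab(1)]] .
  obtain i where i: "i \<in> Idx r" "v b \<in> Rrow i"
    using rows.Rset_cover[OF WC_mem[OF DA_WC[OF v(1)] ab(2)]] .
  obtain x' where x': "x' \<in> Idx r" "w a \<in> Rrow x'"
    using rows.Rset_cover[OF WC_mem[OF DA_WC[OF w(1)] ab(1)]] .
  obtain i' where i': "i' \<in> Idx r" "w b \<in> Rrow i'"
    using rows.Rset_cover[OF WC_mem[OF DA_WC[OF w(1)] ab(2)]] .
  have "x = x'" "i = i'"
    using block_decreasing_same_row[OF v w] ab x x' i i' by blast+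
  consider "x < i" | "i < x" | "x = i"
    by linarith
  then show ?thesis
  proof cases
    case 1
    then show ?thesis
      using rows.Rset_less x' i' \<open>x = x'\<close> \<open>i = i'\<close> by blast
  next
    case 2
    then show ?thesis
      using rows.Rset_less[OF i(1) x(1) 2 i(2) x(2)] ab(3) by simp
  next
    case 3
    have "b < a"
      using v(2) x i ab 3 unfolding block_decreasing_def by blast
    moreover have "w a \<noteq> w b"
      using WC_eq_iff[OF DA_WC[OF w(1)]] \<open>b < a\<close> by auto
    moreover have "w b < w a \<Longrightarrow> a < b"
      using w(2) x' i' ab 3 \<open>x = x'\<close> \<open>i = i'\<close> unfolding block_decreasing_def by blast
    ultimately show ?thesis
      by fastforce
  qed
qed

lemma block_decreasing_unique:
  assumes v: "v \<in> DA" "block_decreasing v" and w: "w \<in> DA" "block_decreasing w"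
  shows "v = w"
proof
  fix a
  show "v a = w a"
  proof (cases "a \<in> sgnset d")
    case False
    then show ?thesis
      using WC_fixes DA_WC v(1) w(1) by metis
  next
    case True
    have "{b \<in> sgnset d. v b < v a} = {b \<in> sgnset d. w b < w a}"
      using block_decreasing_less_transfer[OF v w _ True] block_decreasing_less_transfer[OF w v _ True]
      by blast
    then show ?thesis
      using WC_eq_sgn_nth_card_less[OF DA_WC[OF v(1)] True] WC_eq_sgn_nth_card_less[OF DA_WC[OF w(1)] True]
      by simp
  qed
qed

lemma read_position_in_Rcol:
  assumes c: "(i, j) \<in> Cells" and t: "t < A i j"
  shows "sgn_nth d (read_offset (i, j) + t) \<in> Rcol j"
  using read_offset_in_col_block[OF c] t cols.Rset_eq_block[of j] c by auto

lemma ytA_read_position_in_Rrow: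
  assumes c: "(i, j) \<in> Cells" and t: "t < A i j"
  shows "ytA (sgn_nth d (read_offset (i, j) + t)) \<in> Rrow i"
proof -
  have "fill_offset (i, j) + (A i j - 1 - t) \<in> {rows.block_start i..<rows.block_start i + ro r A i}"
    using fill_offset_in_row_block[OF c] t by auto
  then have "sgn_nth d (fill_offset (i, j) + (A i j - 1 - t)) \<in> Rrow i"
    using c rows.Rset_eq_block[of i] by (metis imageI mem_Sigma_iff)
  then show ?thesis
    unfolding ytA_cell[OF c t] .
qed

lemma cell_of_read_position:
  assumes c: "(i, j) \<in> Cells" and t: "t < A i j"
  shows "sgn_nth d (read_offset (i, j) + t) \<in> cell ytA i j"
  using read_position_in_Rcol[OF c t] ytA_read_position_in_Rrow[OF c t] by (simp add: cell_def)

lemma ytA_decreasing_on_Rcol: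
  assumes j: "j \<in> Idx r" and a: "a \<in> Rcol j" and b: "b \<in> Rcol j" and "a < b"
  shows "ytA b < ytA a"
proof -
  obtain x y t where cx: "(x, y) \<in> Cells" "t < A x y" "a = sgn_nth d (read_offset (x, y) + t)"
    using cols.Rset_subset_sgnset[OF j] a by (blast elim: sgnset_cellE)
  obtain x' y' t' where cx': "(x', y') \<in> Cells" "t' < A x' y'" "b = sgn_nth d (read_offset (x', y') + t')"
    using cols.Rset_subset_sgnset[OF j] b by (blast elim: sgnset_cellE)
  have "y = j" "y' = j"
    using read_position_in_Rcol[OF cx(1,2)] read_position_in_Rcol[OF cx'(1,2)] cx(1,3) cx'(1,3)
      a b j cols.Rset_unique by auto
  have less: "read_offset (x, y) + t < read_offset (x', y') + t'"
    using \<open>a < b\<close> cx(3) cx'(3)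
      sgn_nth_less_iff[OF read_position_bound[OF cx(1,2)] read_position_bound[OF cx'(1,2)]] by simp
  have "fill_offset (x', y') + (A x' y' - 1 - t') < fill_offset (x, y) + (A x y - 1 - t)"
  proof (cases "x = x'")
    case True
    then show ?thesis
      using less \<open>y = j\<close> \<open>y' = j\<close> cx'(2) by simp
  next
    case False
    have "\<not> read_before (x', y') (x, y)"
      using read_offset_le[OF cx'(1) cx(1)] less cx'(2) by auto
    then have "x' < x"
      using False \<open>y = j\<close> \<open>y' = j\<close> by (auto simp: read_before_def)
    then have "fill_offset (x', y') + A x' y' \<le> fill_offset (x, y)"
      using fill_offset_le[OF cx'(1) cx(1)] by (simp add: fill_before_def)
    then show ?thesis
      using cx'(2) by simp
  qed
  then show ?thesis
    using cx(3) cx'(3) ytA_cell[OF cx(1,2)] ytA_cell[OF cx'(1,2)]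
      sgn_nth_less_iff[OF fill_position_bound[OF cx'(1,2)] fill_position_bound[OF cx(1,2)]] by simp
qed

lemma ytA_decreasing_on_Rrow:
  assumes i: "i \<in> Idx r" and a: "a \<in> sgnset d" and b: "b \<in> sgnset d"
    and va: "ytA a \<in> Rrow i" and vb: "ytA b \<in> Rrow i" and "ytA a < ytA b"
  shows "b < a"
proof -
  obtain x y t where cx: "(x, y) \<in> Cells" "t < A x y" "a = sgn_nth d (read_offset (x, y) + t)"
    using a by (rule sgnset_cellE)
  obtain x' y' t' where cx': "(x', y') \<in> Cells" "t' < A x' y'" "b = sgn_nth d (read_offset (x', y') + t')"
    using b by (rule sgnset_cellE)
  have "x = i" "x' = i"
    using ytA_read_position_in_Rrow[OF cx(1,2)] ytA_read_position_in_Rrow[OF cx'(1,2)] cx(1,3) cx'(1,3)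
      va vb i rows.Rset_unique by auto
  have less: "fill_offset (x, y) + (A x y - 1 - t) < fill_offset (x', y') + (A x' y' - 1 - t')"
    using \<open>ytA a < ytA b\<close> cx(3) cx'(3) ytA_cell[OF cx(1,2)] ytA_cell[OF cx'(1,2)]
      sgn_nth_less_iff[OF fill_position_bound[OF cx(1,2)] fill_position_bound[OF cx'(1,2)]] by simp
  have "read_offset (x', y') + t' < read_offset (x, y) + t"
  proof (cases "y = y'")
    case True
    then show ?thesis
      using less \<open>x = i\<close> \<open>x' = i\<close> cx(2) cx'(2) by simp
  next
    case False
    have "\<not> fill_before (x', y') (x, y)"
      using fill_offset_le[OF cx'(1) cx(1)] less cx(2) by auto
    then have "y' < y"
      using False \<open>x = i\<close> \<open>x' = i\<close> by (auto simp: fill_before_def)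
    then have "read_offset (x', y') + A x' y' \<le> read_offset (x, y)"
      using read_offset_le[OF cx'(1) cx(1)] by (simp add: read_before_def)
    then show ?thesis
      using cx'(2) by simp
  qed
  then show ?thesis
    using cx(3) cx'(3)
      sgn_nth_less_iff[OF read_position_bound[OF cx'(1,2)] read_position_bound[OF cx(1,2)]] by simp
qed

lemma ytA_block_decreasing: "block_decreasing ytA"
  unfolding block_decreasing_def using ytA_decreasing_on_Rcol ytA_decreasing_on_Rrow by blast

lemma ytA_DA: "ytA \<in> DA"
  unfolding DA_iff
proof (intro conjI ballI)
  show "ytA \<in> WC d"
    by (rule ytA_WC)
next
  fix i j assume i: "i \<in> Idx r" and j: "j \<in> Idx r"
  have ge: "A x j \<le> card (cell ytA x j)" if x: "x \<in> Idx r" for x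
  proof -
    have xj: "(x, j) \<in> Cells"
      using x j by simp
    have "sgn_nth d ` {read_offset (x, j)..<read_offset (x, j) + A x j} \<subseteq> cell ytA x j"
      using cell_of_read_position[OF xj] by (auto simp: atLeastLessThan_iff le_iff_add)
    moreover have "inj_on (sgn_nth d) {read_offset (x, j)..<read_offset (x, j) + A x j}"
      by (rule inj_on_subset[OF inj_on_sgn_nth]) (use read_offset_bound[OF xj] in auto)
    ultimately show ?thesis
      using card_mono[OF finite_cell] by (metis card_atLeastLessThan card_image add_diff_cancel_left')
  qed
  have "(\<Sum>x\<in>Idx r. card (cell ytA x j)) = card (\<Union>x\<in>Idx r. cell ytA x j)"
    using cells_disjoint[of "(x, j)" "(x', j)" ytA for x x'] j
    by (intro card_UN_disjoint[symmetric]) auto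
  also have "\<dots> \<le> card (Rcol j)"
    by (rule card_mono) (auto simp: cell_def)
  also have "\<dots> = (\<Sum>x\<in>Idx r. A x j)"
    using cols.card_Rset[OF j] by (simp add: co_def)
  finally have "(\<Sum>x\<in>Idx r. card (cell ytA x j)) = (\<Sum>x\<in>Idx r. A x j)"
    using sum_mono[of "Idx r" "\<lambda>x. A x j" "\<lambda>x. card (cell ytA x j)"] ge by (simp add: antisym)
  then show "card (cell ytA i j) = A i j"
    using sum_mono_inv[of "\<lambda>x. A x j" "Idx r" "\<lambda>x. card (cell ytA x j)"] ge i by (metis finite_Idx)
qed

lemma DA_comp_Wpar:
  assumes y: "y \<in> DA" and u: "u \<in> Wpar r d (ro r A)" and p: "p \<in> Wpar r d (co r A)"
  shows "u \<circ> y \<circ> p \<in> DA"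
proof -
  have uW: "u \<in> WC d" and pW: "p \<in> WC d"
    using u p by (auto simp: Wpar_def)
  have "card (Rrow i \<inter> (u \<circ> y \<circ> p) ` Rcol j) = A i j" if "i \<in> Idx r" "j \<in> Idx r" for i j
  proof -
    have "(u \<circ> y \<circ> p) ` Rcol j = u ` y ` p ` Rcol j"
      by (simp add: image_image)
    also have "p ` Rcol j = Rcol j"
      using p that by (simp add: Wpar_def)
    finally have "(u \<circ> y \<circ> p) ` Rcol j = u ` y ` Rcol j" .
    then have "Rrow i \<inter> (u \<circ> y \<circ> p) ` Rcol j = u ` (Rrow i \<inter> y ` Rcol j)"
      using u that WC_inj[OF uW] by (simp add: Wpar_def image_Int)
    then show ?thesis
      using y that WC_inj[OF uW] by (simp add: card_image DA_def)
  qed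
  then show ?thesis
    using WC_comp[OF WC_comp[OF uW DA_WC[OF y]] pW] by (simp add: DA_def)
qed

definition row_of :: "(int \<Rightarrow> int) \<Rightarrow> int \<Rightarrow> int" where
  "row_of v a = (THE i. i \<in> Idx r \<and> v a \<in> Rrow i)"

definition col_of :: "int \<Rightarrow> int" where
  "col_of a = (THE j. j \<in> Idx r \<and> a \<in> Rcol j)"

lemma row_of_eq: "i \<in> Idx r \<Longrightarrow> v a \<in> Rrow i \<Longrightarrow> row_of v a = i"
  unfolding row_of_def using rows.Rset_unique by blast

lemma col_of_eq: "j \<in> Idx r \<Longrightarrow> a \<in> Rcol j \<Longrightarrow> col_of a = j"
  unfolding col_of_def using cols.Rset_unique by blast

lemma cell_of:
  assumes "v \<in> WC d" "a \<in> sgnset d"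
  shows "(row_of v a, col_of a) \<in> Cells" "a \<in> cell v (row_of v a) (col_of a)"
proof -
  obtain i j where "(i, j) \<in> Cells" "a \<in> cell v i j"
    using assms by (rule cellE)
  moreover from this have "row_of v a = i" "col_of a = j"
    using row_of_eq col_of_eq by (auto simp: cell_def)
  ultimately show "(row_of v a, col_of a) \<in> Cells" "a \<in> cell v (row_of v a) (col_of a)"
    by simp_all
qed

lemma cell_uminus:
  assumes v: "v \<in> WC d" and c: "(i, j) \<in> Cells" and a: "a \<in> cell v i j"
  shows "- a \<in> cell v (- i) (- j)"
proof -
  have "- a \<in> uminus ` Rcol j" "- v a \<in> uminus ` Rrow i"
    using a by (auto simp: cell_def)
  then show ?thesis
    using c rows.Rset_uminus[of i] cols.Rset_uminus[of j] WC_odd[OF v, of a] by (simp add: cell_def)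
qed

lemma cell_of_uminus:
  assumes v: "v \<in> WC d" and a: "a \<in> sgnset d"
  shows "row_of v (- a) = - row_of v a" "col_of (- a) = - col_of a"
proof -
  have "- a \<in> cell v (- row_of v a) (- col_of a)"
    by (rule cell_uminus[OF v cell_of[OF v a]])
  moreover have "- row_of v a \<in> Idx r" "- col_of a \<in> Idx r"
    using cell_of(1)[OF v a] by auto
  ultimately show "row_of v (- a) = - row_of v a" "col_of (- a) = - col_of a"
    by (auto simp: cell_def intro: row_of_eq col_of_eq)
qed

lemma pos_iff_col_of_pos:
  assumes "a \<in> sgnset d"
  shows "0 < a \<longleftrightarrow> 0 < col_of a"
proof -
  have "col_of a \<in> Idx r" "a \<in> Rcol (col_of a)"
    using cell_of[OF WC_id assms] by (auto simp: cell_def)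
  then show ?thesis
    by (rule cols.Rset_pos_iff)
qed

lemma ex_cell_matching:
  assumes y: "y \<in> DA" and v: "v \<in> DA"
  obtains f where "\<And>a. a \<in> sgnset d \<Longrightarrow> f a \<in> cell y (row_of v a) (col_of a)"
    and "\<And>a b. a \<in> sgnset d \<Longrightarrow> b \<in> sgnset d \<Longrightarrow> row_of v a = row_of v b \<Longrightarrow>
      col_of a = col_of b \<Longrightarrow> f a = f b \<Longrightarrow> a = b"
proof -
  have vW: "v \<in> WC d"
    using v by (simp add: DA_WC)
  define \<beta> where "\<beta> i j = (SOME f. bij_betw f (cell v i j) (cell y i j))" for i j
  have \<beta>: "bij_betw (\<beta> i j) (cell v i j) (cell y i j)" if "(i, j) \<in> Cells" for i j
  proof -
    have "card (cell v i j) = card (cell y i j)"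
      using card_cell_DA[OF v that] card_cell_DA[OF y that] by simp
    then have "\<exists>f. bij_betw f (cell v i j) (cell y i j)"
      by (intro finite_same_card_bij) simp_all
    then show ?thesis
      unfolding \<beta>_def by (rule someI_ex)
  qed
  show ?thesis
  proof (rule that[of "\<lambda>a. \<beta> (row_of v a) (col_of a) a"])
    show "\<beta> (row_of v a) (col_of a) a \<in> cell y (row_of v a) (col_of a)" if "a \<in> sgnset d" for a
      using \<beta>[OF cell_of(1)[OF vW that]] cell_of(2)[OF vW that] by (meson bij_betwE)
    show "a = b" if "a \<in> sgnset d" "b \<in> sgnset d" "row_of v a = row_of v b" "col_of a = col_of b"
      and "\<beta> (row_of v a) (col_of a) a = \<beta> (row_of v b) (col_of b) b" for a b
      using \<beta>[OF cell_of(1)[OF vW that(1)]] cell_of(2)[OF vW that(1)] cell_of(2)[OF vW that(2)] that(3-5)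
      unfolding bij_betw_def inj_on_def by metis
  qed
qed

lemma odd_ext_cell:
  assumes v: "v \<in> WC d" and y: "y \<in> WC d"
    and f_cell: "\<And>a. a \<in> sgnset d \<Longrightarrow> f a \<in> cell y (row_of v a) (col_of a)"
    and a: "a \<in> sgnset d"
  shows "odd_ext d f a \<in> cell y (row_of v a) (col_of a)"
proof (cases "0 < a")
  case True
  then show ?thesis
    using f_cell[OF a] a by (simp add: odd_ext_def)
next
  case False
  have "- f (- a) \<in> cell y (- row_of v (- a)) (- col_of (- a))"
    using cell_uminus[OF y cell_of(1)[OF v] f_cell] a by simp
  then show ?thesis
    using False a cell_of_uminus[OF v a] by (simp add: odd_ext_def)
qed

lemma inj_on_odd_ext_cell:
  assumes v: "v \<in> WC d" and y: "y \<in> WC d"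
    and f_cell: "\<And>a. a \<in> sgnset d \<Longrightarrow> f a \<in> cell y (row_of v a) (col_of a)"
    and f_inj: "\<And>a b. a \<in> sgnset d \<Longrightarrow> b \<in> sgnset d \<Longrightarrow> row_of v a = row_of v b \<Longrightarrow>
      col_of a = col_of b \<Longrightarrow> f a = f b \<Longrightarrow> a = b"
  shows "inj_on (odd_ext d f) (sgnset d)"
proof
  fix a b assume a: "a \<in> sgnset d" and b: "b \<in> sgnset d" and eq: "odd_ext d f a = odd_ext d f b"
  have same_cell: "row_of v a = row_of v b" "col_of a = col_of b"
    using cells_disjoint[OF cell_of(1)[OF v a] cell_of(1)[OF v b], of y]
      odd_ext_cell[OF v y f_cell a] odd_ext_cell[OF v y f_cell b] eq
    by auto
  then have "0 < a \<longleftrightarrow> 0 < b"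
    using pos_iff_col_of_pos a b by simp
  then consider "0 < a" "f a = f b" | "\<not> 0 < a" "f (- a) = f (- b)"
    using eq a b by (auto simp: odd_ext_def)
  then show "a = b"
  proof cases
    case 1
    then show ?thesis
      using f_inj[OF a b same_cell] by simp
  next
    case 2
    have "row_of v (- a) = row_of v (- b)" "col_of (- a) = col_of (- b)"
      using same_cell cell_of_uminus[OF v a] cell_of_uminus[OF v b] by simp_all
    then show ?thesis
      using f_inj[of "- a" "- b"] a b 2(2) by simp
  qed
qed

lemma ex_cell_transport:
  assumes y: "y \<in> DA" and v: "v \<in> DA"
  obtains p where "p \<in> WC d" "\<And>a. a \<in> sgnset d \<Longrightarrow> p a \<in> cell y (row_of v a) (col_of a)"
proof -
  have vW: "v \<in> WC d" and yW: "y \<in> WC d"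
    using v y by (simp_all add: DA_WC)
  obtain f where f_cell: "\<And>a. a \<in> sgnset d \<Longrightarrow> f a \<in> cell y (row_of v a) (col_of a)"
    and f_inj: "\<And>a b. a \<in> sgnset d \<Longrightarrow> b \<in> sgnset d \<Longrightarrow> row_of v a = row_of v b \<Longrightarrow>
      col_of a = col_of b \<Longrightarrow> f a = f b \<Longrightarrow> a = b"
    using ex_cell_matching[OF y v] by blast
  have "odd_ext d f ` sgnset d \<subseteq> sgnset d"
    using odd_ext_cell[OF vW yW f_cell] cols.Rset_subset_sgnset cell_of(1)[OF vW]
    by (fastforce simp: cell_def)
  then have "odd_ext d f \<in> WC d"
    by (intro odd_ext_WC inj_on_odd_ext_cell[OF vW yW f_cell f_inj])
  then show ?thesis
    using that odd_ext_cell[OF vW yW f_cell] by blast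
qed

lemma cell_transport_Wpar_cols:
  assumes p: "p \<in> WC d" and p_cell: "\<And>a. a \<in> sgnset d \<Longrightarrow> p a \<in> cell y (row_of v a) (col_of a)"
  shows "p \<in> Wpar r d (co r A)"
proof (rule Wpar_if_maps_into[OF p])
  fix j assume "j \<in> Idx r"
  then show "p ` Rcol j \<subseteq> Rcol j"
    using p_cell cols.Rset_subset_sgnset col_of_eq by (fastforce simp: cell_def)
qed

lemma cell_transport_Wpar_rows:
  assumes v: "v \<in> WC d" and y: "y \<in> WC d" and p: "p \<in> WC d"
    and p_cell: "\<And>a. a \<in> sgnset d \<Longrightarrow> p a \<in> cell y (row_of v a) (col_of a)"
  shows "v \<circ> inv p \<circ> inv y \<in> Wpar r d (ro r A)"
proof (rule Wpar_if_maps_into)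
  show "v \<circ> inv p \<circ> inv y \<in> WC d"
    using WC_comp WC_inv v p y by blast
  fix i assume i: "i \<in> Idx r"
  show "(v \<circ> inv p \<circ> inv y) ` Rrow i \<subseteq> Rrow i"
  proof
    fix z assume "z \<in> (v \<circ> inv p \<circ> inv y) ` Rrow i"
    then obtain w where w: "w \<in> Rrow i" "z = v (inv p (inv y w))"
      by auto
    define a where "a = inv p (inv y w)"
    have a: "a \<in> sgnset d"
      unfolding a_def using WC_mem WC_inv p y rows.Rset_subset_sgnset[OF i] w(1) by blast
    have "y (p a) = w"
      using p y by (simp add: a_def)
    then have "row_of v a = i"
      using p_cell[OF a] cell_of(1)[OF v a] w(1) i rows.Rset_unique by (auto simp: cell_def)
    then show "z \<in> Rrow i"
      using cell_of(2)[OF v a] w(2) by (simp add: cell_def a_def)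
  qed
qed

lemma DA_subset_dcoset:
  assumes y: "y \<in> DA" and v: "v \<in> DA"
  obtains u p where "u \<in> Wpar r d (ro r A)" "p \<in> Wpar r d (co r A)" "v = u \<circ> y \<circ> p"
proof -
  have vW: "v \<in> WC d" and yW: "y \<in> WC d"
    using v y by (simp_all add: DA_WC)
  obtain p where pW: "p \<in> WC d" and p_cell: "\<And>a. a \<in> sgnset d \<Longrightarrow> p a \<in> cell y (row_of v a) (col_of a)"
    using ex_cell_transport[OF y v] by blast
  have "v = (v \<circ> inv p \<circ> inv y) \<circ> y \<circ> p"
    using pW yW by (simp add: fun_eq_iff)
  then show ?thesis
    using that cell_transport_Wpar_rows[OF vW yW pW p_cell] cell_transport_Wpar_cols[OF pW p_cell]
    by blast
qed

lemma dcoset_eq_DA: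
  assumes "y \<in> DA"
  shows "dcoset r d (ro r A) (co r A) y = DA"
  using DA_comp_Wpar[OF assms] DA_subset_dcoset[OF assms] unfolding dcoset_def by blast

lemma dcoset_of_eq_DA: "dcoset_of r d A = DA"
  unfolding dcoset_of_def
proof (rule the_equality)
  show "\<exists>y\<in>WC d. DA = dcoset r d (ro r A) (co r A) y \<and>
      (\<forall>i\<in>Idx r. \<forall>j\<in>Idx r. card (Rrow i \<inter> y ` Rcol j) = A i j)"
    using ytA_DA dcoset_eq_DA[OF ytA_DA] by (intro bexI[of _ ytA]) (auto simp: DA_def)
next
  fix D assume "\<exists>y\<in>WC d. D = dcoset r d (ro r A) (co r A) y \<and>
      (\<forall>i\<in>Idx r. \<forall>j\<in>Idx r. card (Rrow i \<inter> y ` Rcol j) = A i j)"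
  then show "D = DA"
    using dcoset_eq_DA by (auto simp: DA_def)
qed

section \<open>The longest element of the double coset\<close>

lemma ninvC_ytA: "2 * ninvC d ytA + nw_weight = d * (2 * d - 1) + negpos_weight"
  using ninvC_DA[OF ytA_DA] block_decreasing_iff_card_noninv[OF ytA_DA] ytA_block_decreasing by simp

lemma ninvC_le_ninvC_ytA: "v \<in> DA \<Longrightarrow> ninvC d v \<le> ninvC d ytA"
  using ninvC_DA ninvC_ytA nw_weight_le_card_noninv by fastforce

lemma DA_eq_ytA_if_ninvC_ge:
  assumes v: "v \<in> DA" and ge: "ninvC d ytA \<le> ninvC d v"
  shows "v = ytA"
proof -
  have "card (noninv d v) \<le> nw_weight"
    using ninvC_DA[OF v] ninvC_ytA ge by linarith
  then have "block_decreasing v"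
    using block_decreasing_iff_card_noninv[OF v] nw_weight_le_card_noninv[OF v] by simp
  then show ?thesis
    using block_decreasing_unique[OF v _ ytA_DA ytA_block_decreasing] by simp
qed

lemma wplus_eq_ytA: "wplus r d A = ytA"
  unfolding wplus_def dcoset_of_eq_DA
proof (rule the_equality)
  show "ytA \<in> DA \<and> (\<forall>v\<in>DA. lenC d v \<le> lenC d ytA)"
    using ytA_DA ninvC_le_ninvC_ytA by (simp add: lenC_eq_ninvC DA_WC)
  show "w = ytA" if w: "w \<in> DA \<and> (\<forall>v\<in>DA. lenC d v \<le> lenC d w)" for w
  proof (rule DA_eq_ytA_if_ninvC_ge)
    show "ninvC d ytA \<le> ninvC d w"
      using w ytA_DA by (metis DA_WC lenC_eq_ninvC)
  qed (use w in simp)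
qed

section \<open>The length formula\<close>

definition nw_sum :: "int \<Rightarrow> int \<Rightarrow> nat" where
  "nw_sum i j = (\<Sum>x\<in>{x \<in> Idx r. x < i}. \<Sum>y\<in>{y \<in> Idx r. y < j}. A x y)"

definition se_sum :: "int \<Rightarrow> int \<Rightarrow> nat" where
  "se_sum i j = (\<Sum>x\<in>{x \<in> Idx r. x > i}. \<Sum>y\<in>{y \<in> Idx r. y > j}. A x y)"

lemma sum_gt_Idx_reflect: "(\<Sum>x\<in>{x \<in> Idx r. x > i}. f x) = (\<Sum>x\<in>{x \<in> Idx r. x < - i}. f (- x))"
  by (rule sum.reindex_bij_witness[of _ uminus uminus]) auto

lemma se_sum_eq_nw_sum_uminus:
  assumes "i \<in> Idx r" "j \<in> Idx r"
  shows "se_sum i j = nw_sum (- i) (- j)"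
  unfolding se_sum_def nw_sum_def sum_gt_Idx_reflect
  by (intro sum.cong refl) (simp add: A_uminus)

lemma sum_A_nw_sum_reflect:
  assumes "I \<subseteq> Idx r"
  shows "(\<Sum>i\<in>uminus ` I. \<Sum>j\<in>Idx r. A i j * nw_sum i j) = (\<Sum>i\<in>I. \<Sum>j\<in>Idx r. A i j * se_sum i j)"
proof -
  have "(\<Sum>i\<in>uminus ` I. \<Sum>j\<in>Idx r. A i j * nw_sum i j) = (\<Sum>i\<in>I. \<Sum>j\<in>Idx r. A (- i) j * nw_sum (- i) j)"
    by (simp add: sum.reindex)
  also have "\<dots> = (\<Sum>i\<in>I. \<Sum>j\<in>Idx r. A (- i) (- j) * nw_sum (- i) (- j))"
    by (rule sum.cong[OF refl], rule sum.reindex_bij_witness[of _ uminus uminus]) auto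
  also have "\<dots> = (\<Sum>i\<in>I. \<Sum>j\<in>Idx r. A i j * se_sum i j)"
    using assms by (intro sum.cong refl) (auto simp: A_uminus se_sum_eq_nw_sum_uminus)
  finally show ?thesis .
qed

lemma nw_weight_eq: "nw_weight = (\<Sum>i\<in>Idx r. \<Sum>j\<in>Idx r. A i j * nw_sum i j)"
proof -
  let ?SE = "\<lambda>c. {x \<in> Idx r. fst c < x} \<times> {y \<in> Idx r. snd c < y}"
  have "nw_pairs = Sigma Cells ?SE"
    by (auto simp: nw_pairs_def)
  then have "nw_weight = (\<Sum>c\<in>Cells. \<Sum>c'\<in>?SE c. case_prod A c * case_prod A c')"
    unfolding nw_weight_def by (simp add: sum.Sigma case_prod_beta)
  also have "\<dots> = (\<Sum>c\<in>Cells. case_prod A c * se_sum (fst c) (snd c))"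
  proof (rule sum.cong[OF refl])
    fix c :: "int \<times> int"
    have "se_sum (fst c) (snd c) = sum (case_prod A) (?SE c)"
      by (simp add: se_sum_def sum.cartesian_product)
    then show "(\<Sum>c'\<in>?SE c. case_prod A c * case_prod A c') = case_prod A c * se_sum (fst c) (snd c)"
      by (simp add: sum_distrib_left)
  qed
  also have "\<dots> = (\<Sum>i\<in>Idx r. \<Sum>j\<in>Idx r. A i j * se_sum i j)"
    by (simp add: sum.cartesian_product case_prod_beta)
  also have "\<dots> = (\<Sum>i\<in>Idx r. \<Sum>j\<in>Idx r. A i j * nw_sum i j)"
    using sum_A_nw_sum_reflect[of "Idx r"] by (simp add: uminus_image_Idx)
  finally show ?thesis .
qed

lemma nw_weight_eq_half_sum:
  "(\<Sum>i\<in>{1..int r}. \<Sum>j\<in>Idx r.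
      (\<Sum>x\<in>{x \<in> Idx r. x < i}. \<Sum>y\<in>{y \<in> Idx r. y < j}. A i j * A x y)
    + (\<Sum>x\<in>{x \<in> Idx r. x > i}. \<Sum>y\<in>{y \<in> Idx r. y > j}. A i j * A x y)) = nw_weight"
proof -
  have pos: "{1..int r} = {i \<in> Idx r. 0 < i}"
    by (auto simp: Idx_def)
  have "(\<Sum>i\<in>{1..int r}. \<Sum>j\<in>Idx r.
      (\<Sum>x\<in>{x \<in> Idx r. x < i}. \<Sum>y\<in>{y \<in> Idx r. y < j}. A i j * A x y)
    + (\<Sum>x\<in>{x \<in> Idx r. x > i}. \<Sum>y\<in>{y \<in> Idx r. y > j}. A i j * A x y))
    = (\<Sum>i\<in>{i \<in> Idx r. 0 < i}. \<Sum>j\<in>Idx r. A i j * nw_sum i j)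
      + (\<Sum>i\<in>{i \<in> Idx r. 0 < i}. \<Sum>j\<in>Idx r. A i j * se_sum i j)"
    by (simp add: pos nw_sum_def se_sum_def sum_distrib_left sum.distrib)
  also have "(\<Sum>i\<in>{i \<in> Idx r. 0 < i}. \<Sum>j\<in>Idx r. A i j * se_sum i j)
      = (\<Sum>i\<in>{i \<in> Idx r. i < 0}. \<Sum>j\<in>Idx r. A i j * nw_sum i j)"
    using sum_A_nw_sum_reflect[of "{i \<in> Idx r. 0 < i}"] by (simp add: uminus_image_Idx_pos)
  also have "(\<Sum>i\<in>{i \<in> Idx r. 0 < i}. \<Sum>j\<in>Idx r. A i j * nw_sum i j)
      + (\<Sum>i\<in>{i \<in> Idx r. i < 0}. \<Sum>j\<in>Idx r. A i j * nw_sum i j)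
      = (\<Sum>i\<in>Idx r. \<Sum>j\<in>Idx r. A i j * nw_sum i j)"
    by (subst (3) Idx_split_sign, subst sum.union_disjoint) auto
  finally show ?thesis
    using nw_weight_eq by simp
qed

lemma sum_pos_pos_add_negpos_weight:
  "(\<Sum>i\<in>{i \<in> Idx r. i > 0}. \<Sum>j\<in>{j \<in> Idx r. j > 0}. A i j) + negpos_weight = d"
proof -
  have "(\<Sum>i\<in>{i \<in> Idx r. i > 0}. \<Sum>j\<in>{j \<in> Idx r. j > 0}. A i j) + negpos_weight
      = (\<Sum>i\<in>Idx r. \<Sum>j\<in>{j \<in> Idx r. j > 0}. A i j)"
    unfolding negpos_weight_def by (subst (3) Idx_split_sign, subst sum.union_disjoint) auto
  also have "\<dots> = sum (co r A) {j \<in> Idx r. 0 < j}"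
    unfolding co_def by (rule sum.swap)
  also have "\<dots> = d"
    using cols.sum_lam_neg cols.sum_lam
    by (subst (asm) Idx_split_sign, subst (asm) sum.union_disjoint) auto
  finally show ?thesis .
qed

lemma lenC_wplus_formula:
  "real (lenC d (wplus r d A)) =
        real d ^ 2
        - 1/2 * (\<Sum>i\<in>{1..int r}. \<Sum>j\<in>Idx r.
              (\<Sum>x\<in>{x\<in>Idx r. x < i}. \<Sum>y\<in>{y\<in>Idx r. y < j}. real (A i j * A x y))
            + (\<Sum>x\<in>{x\<in>Idx r. x > i}. \<Sum>y\<in>{y\<in>Idx r. y > j}. real (A i j * A x y)))
        - 1/2 * (\<Sum>i\<in>{i\<in>Idx r. i > 0}. \<Sum>j\<in>{j\<in>Idx r. j > 0}. real (A i j))"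
proof -
  have nw: "(\<Sum>i\<in>{1..int r}. \<Sum>j\<in>Idx r.
              (\<Sum>x\<in>{x\<in>Idx r. x < i}. \<Sum>y\<in>{y\<in>Idx r. y < j}. real (A i j * A x y))
            + (\<Sum>x\<in>{x\<in>Idx r. x > i}. \<Sum>y\<in>{y\<in>Idx r. y > j}. real (A i j * A x y))) = real nw_weight"
    using arg_cong[OF nw_weight_eq_half_sum, of real] by (simp add: of_nat_sum)
  have pos: "(\<Sum>i\<in>{i\<in>Idx r. i > 0}. \<Sum>j\<in>{j\<in>Idx r. j > 0}. real (A i j)) = real d - real negpos_weight"
    using arg_cong[OF sum_pos_pos_add_negpos_weight, of real] by (simp add: of_nat_sum)
  have "2 * real (ninvC d ytA) + real nw_weight = real d * (2 * real d - 1) + real negpos_weight"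
    using arg_cong[OF ninvC_ytA, of real] by (cases "d = 0") (simp_all add: of_nat_diff)
  then show ?thesis
    unfolding wplus_eq_ytA nw pos lenC_eq_ninvC[OF ytA_WC] by (simp add: power2_eq_square algebra_simps)
qed

end

theorem lemma5p5:
  fixes r d :: nat and A :: "int \<Rightarrow> int \<Rightarrow> nat"
  assumes "d \<ge> 1" and "r \<ge> 1" and "A \<in> PiC r d"
  shows "ytilde r d A = wplus r d A
    \<and> real (lenC d (wplus r d A)) =
        real d ^ 2
        - 1/2 * (\<Sum>i\<in>{1..int r}. \<Sum>j\<in>Idx r.
              (\<Sum>x\<in>{x\<in>Idx r. x < i}. \<Sum>y\<in>{y\<in>Idx r. y < j}. real (A i j * A x y))
            + (\<Sum>x\<in>{x\<in>Idx r. x > i}. \<Sum>y\<in>{y\<in>Idx r. y > j}. real (A i j * A x y)))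
        - 1/2 * (\<Sum>i\<in>{i\<in>Idx r. i > 0}. \<Sum>j\<in>{j\<in>Idx r. j > 0}. real (A i j))"
proof -
  have A_sym: "\<forall>i\<in>Idx r. \<forall>j\<in>Idx r. A i j = A (- i) (- j)"
    and total: "(\<Sum>i\<in>Idx r. \<Sum>j\<in>Idx r. A i j) = 2 * d"
    using assms(3) unfolding PiC_def mem_Collect_eq by (rule conjunct1, rule conjunct2)
  interpret pi_matrix r d A
  proof
    show "A (- i) (- j) = A i j" if "i \<in> Idx r" "j \<in> Idx r" for i j
      using bspec[OF bspec[OF A_sym that(1)] that(2)] by (rule HOL.sym)
  qed (rule total)
  show ?thesis
    using wplus_eq_ytA lenC_wplus_formula by simp
qed

end
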